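(* In the $q$-boson algebra $\mathcal H_n$ (with central parameter $z$), the following identities of formal power series in $u$ hold: $$T(u)Q^+(u)=Q^+(uq^2)+\Delta(u)Q^+(uq^{-2}),\qquad Q^-(u)T(u)=Q^-(uq^{-2})+\Delta(uq^2)Q^-(uq^2),$$ where $\Delta(u)=zq^{2N}u^n$.
   Context: $q$ is an indeterminate, $n\ge1$. $\mathcal H_n$ is the $\mathbb C(q)$-algebra generated by $\beta_i,\beta_i^*,q^{\pm N_i}$ ($i=1,\dots,n$) with relations: $q^{\pm N_i}$ mutually inverse and commuting, $q^{N_i}\beta_j=q^{-\delta_{ij}}\beta_jq^{N_i}$, $q^{N_i}\beta_j^*=q^{\delta_{ij}}\beta^*_jq^{N_i}$, $\beta_i\beta_j^*-\beta_j^*\beta_i=\delta_{ij}(1-q^2)q^{2N_i}$, $\beta_i\beta_i^*-q^2\beta_i^*\beta_i=1-q^2$, generators at different sites commute. $q^{2N}:=\prod_{i=1}^n(q^{N_i})^2$; $(q^2)_m=\prod_{j=1}^m(1-q^{2j})$; $z$ is a central parameter. Transfer matrix: with $L_j(u)=\begin{pmatrix}1&u\beta_j^*\\ \beta_j&u\end{pmatrix}$ and $L_n(u)\cdots L_1(u)=\begin{pmatrix}A(u)&B(u)\\C(u)&D(u)\end{pmatrix}$ (ordinary $2\times2$ matrix product, entries multiplied in order), $T(u)=A(u)+zD(u)$. $Q$-operators: $Q^\pm(u)=\sum_{m_1,\dots,m_n\ge0}z^{m_1}\ell^\pm_1(m_1,m_2)\ell^\pm_2(m_2,m_3)\cdots\ell^\pm_n(m_n,m_1)$,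 with $\ell^+_i(a,b)=(-u)^a(\beta_i^* )^a\beta_i^b/(q^2)_a$ and $\ell^-_i(a,b)=u^aq^{a(a+1)}\beta_i^b(\beta_i^* )^a/(q^2)_a$; these are formal power series in $u$ with coefficients in $\mathcal H_n[z]$. Substitutions $u\mapsto uq^{\pm2}$ are made in these power series. *)

theory Defs
  imports Complex_Main "HOL-Computational_Algebra.Formal_Power_Series"
    "HOL-Computational_Algebra.Fraction_Field" "HOL-Computational_Algebra.Polynomial"
begin

type_synonym cq = "complex poly fract"

definition qf :: cq where "qf = Fract [:0, 1:] 1"

definition qpoch :: "nat \<Rightarrow> cq" where
  "qpoch m = (\<Prod>j\<in>{1..m}. 1 - qf ^ (2 * j))"

text \<open>A C(q)-algebra (ring A with a ring homomorphism emb from C(q) into its centre),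
  containing elements beta i, betas i (= beta_i^* ), K i (= q^{N_i}), Kinv i (= q^{-N_i}),
  i = 1..n, satisfying the defining relations of the q-boson algebra H_n, together
  with a central element z.  Since H_n[z] is presented by generators and relations,
  an identity holds in H_n[z] iff it holds in every such algebra.\<close>
definition qboson_alg ::
  "nat \<Rightarrow> (cq \<Rightarrow> 'a::ring_1) \<Rightarrow> (nat \<Rightarrow> 'a) \<Rightarrow> (nat \<Rightarrow> 'a) \<Rightarrow> (nat \<Rightarrow> 'a) \<Rightarrow> (nat \<Rightarrow> 'a) \<Rightarrow> 'a \<Rightarrow> bool"
where
  "qboson_alg n emb beta betas K Kinv z \<longleftrightarrow>
     \<comment> \<open>emb is a unital ring homomorphism onto central elements\<close>
     emb 0 = 0 \<and> emb 1 = 1 \<and>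
     (\<forall>a b. emb (a + b) = emb a + emb b) \<and> (\<forall>a b. emb (a * b) = emb a * emb b) \<and>
     (\<forall>c x. emb c * x = x * emb c) \<and>
     \<comment> \<open>z is central\<close>
     (\<forall>x. z * x = x * z) \<and>
     (\<forall>i\<in>{1..n}. \<forall>j\<in>{1..n}.
        \<comment> \<open>q^{\<plusminus>N_i} mutually inverse and commuting\<close>
        K i * Kinv i = 1 \<and> Kinv i * K i = 1 \<and>
        K i * K j = K j * K i \<and> K i * Kinv j = Kinv j * K i \<and> Kinv i * Kinv j = Kinv j * Kinv i \<and>
        \<comment> \<open>q^{N_i} beta_j = q^{-delta_ij} beta_j q^{N_i}, q^{N_i} beta_j^* = q^{delta_ij} beta_j^* q^{N_i}\<close>
        K i * beta j = emb (if i = j then inverse qf else 1) * beta j * K i \<and>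
        K i * betas j = emb (if i = j then qf else 1) * betas j * K i \<and>
        \<comment> \<open>beta_i beta_j^* - beta_j^* beta_i = delta_ij (1-q^2) q^{2N_i}\<close>
        beta i * betas j - betas j * beta i = (if i = j then emb (1 - qf ^ 2) * K i ^ 2 else 0) \<and>
        \<comment> \<open>beta_i beta_i^* - q^2 beta_i^* beta_i = 1 - q^2\<close>
        beta i * betas i - emb (qf ^ 2) * betas i * beta i = emb (1 - qf ^ 2) \<and>
        \<comment> \<open>generators at different sites commute\<close>
        (i \<noteq> j \<longrightarrow>
           beta i * beta j = beta j * beta i \<and> betas i * betas j = betas j * betas i \<and>
           beta i * betas j = betas j * beta i \<and>
           Kinv i * beta j = beta j * Kinv i \<and> Kinv i * betas j = betas j * Kinv i))"

definition fps_scale :: "'a::ring_1 \<Rightarrow> 'a fps \<Rightarrow> 'a fps" where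
  "fps_scale c f = Abs_fps (\<lambda>k. c ^ k * fps_nth f k)"

text \<open>2x2 matrices over fps as quadruples (a, b, c, d) = [[a, b], [c, d]].\<close>
type_synonym 'a mat2 = "'a fps \<times> 'a fps \<times> 'a fps \<times> 'a fps"

definition mat2_mult :: "'a::ring_1 mat2 \<Rightarrow> 'a mat2 \<Rightarrow> 'a mat2" where
  "mat2_mult M N = (case M of (a, b, c, d) \<Rightarrow> case N of (a', b', c', d') \<Rightarrow>
     (a * a' + b * c', a * b' + b * d', c * a' + d * c', c * b' + d * d'))"

definition Lop :: "(nat \<Rightarrow> 'a::ring_1) \<Rightarrow> (nat \<Rightarrow> 'a) \<Rightarrow> nat \<Rightarrow> 'a mat2" where
  "Lop beta betas j = (1, fps_X * fps_const (betas j), fps_const (beta j), fps_X)"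

fun monodromy :: "(nat \<Rightarrow> 'a::ring_1) \<Rightarrow> (nat \<Rightarrow> 'a) \<Rightarrow> nat \<Rightarrow> 'a mat2" where
  "monodromy beta betas 0 = (1, 0, 0, 1)"
| "monodromy beta betas (Suc k) = mat2_mult (Lop beta betas (Suc k)) (monodromy beta betas k)"

definition transfer :: "nat \<Rightarrow> (nat \<Rightarrow> 'a::ring_1) \<Rightarrow> (nat \<Rightarrow> 'a) \<Rightarrow> 'a \<Rightarrow> 'a fps" where
  "transfer n beta betas z = (case monodromy beta betas n of (A, B, C, D) \<Rightarrow> A + fps_const z * D)"

text \<open>u-free parts of l^+_i(a,b) and l^-_i(a,b) (they carry the factor u^a).\<close>
definition ellp :: "(cq \<Rightarrow> 'a::ring_1) \<Rightarrow> (nat \<Rightarrow> 'a) \<Rightarrow> (nat \<Rightarrow> 'a) \<Rightarrow> nat \<Rightarrow> nat \<Rightarrow> nat \<Rightarrow> 'a" where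
  "ellp emb beta betas i a b = emb ((- 1) ^ a / qpoch a) * betas i ^ a * beta i ^ b"

definition ellm :: "(cq \<Rightarrow> 'a::ring_1) \<Rightarrow> (nat \<Rightarrow> 'a) \<Rightarrow> (nat \<Rightarrow> 'a) \<Rightarrow> nat \<Rightarrow> nat \<Rightarrow> nat \<Rightarrow> 'a" where
  "ellm emb beta betas i a b = emb (qf ^ (a * (a + 1)) / qpoch a) * beta i ^ b * betas i ^ a"

definition tuples :: "nat \<Rightarrow> nat \<Rightarrow> (nat \<Rightarrow> nat) set" where
  "tuples n k = {m. (\<forall>i. i \<notin> {1..n} \<longrightarrow> m i = 0) \<and> (\<Sum>i\<in>{1..n}. m i) = k}"

definition cnext :: "nat \<Rightarrow> nat \<Rightarrow> nat" where
  "cnext n i = (if i = n then 1 else i + 1)"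

text \<open>Q(u) = sum_m z^{m_1} l_1(m_1,m_2) l_2(m_2,m_3) ... l_n(m_n,m_1), as fps in u
  (the coefficient of u^k collects the tuples with m_1+...+m_n = k; ordered product).\<close>
definition Qop :: "nat \<Rightarrow> (nat \<Rightarrow> nat \<Rightarrow> nat \<Rightarrow> 'a::ring_1) \<Rightarrow> 'a \<Rightarrow> 'a fps" where
  "Qop n ell z = Abs_fps (\<lambda>k. \<Sum>m\<in>tuples n k.
      z ^ m 1 * prod_list (map (\<lambda>i. ell i (m i) (m (cnext n i))) [1..<n+1]))"

definition Qplus where "Qplus n emb beta betas z = Qop n (ellp emb beta betas) z"
definition Qminus where "Qminus n emb beta betas z = Qop n (ellm emb beta betas) z"

definition Delta :: "nat \<Rightarrow> (nat \<Rightarrow> 'a::ring_1) \<Rightarrow> 'a \<Rightarrow> 'a fps" where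
  "Delta n K z = fps_const (z * prod_list (map (\<lambda>i. K i ^ 2) [1..<n+1])) * fps_X ^ n"

end

theory Submission
  imports Defs
begin

(* Index the auxiliary space of the monodromy by r \<in> {0,1} and the summation index of the
   Q-operator by a \<in> \<nat>. At one site, the L-operator times the weight l_i(c,b) u^c is a 2x2
   block G_rs(c,b) of infinite matrices. The q-boson relations say precisely that conjugating this
   block by the unipotent gauge U, which adds row (1,a-1) to row (0,a), makes it block lower
   triangular; its diagonal blocks are the weight at u q^{\<plusminus>2} and, up to powers of q,
   q^{2N_i} u times the weight at u q^{\<mp>2}. Since different sites commute, triangularity
   survives the product along the chain and the diagonal blocks multiply. Finally U commutes with
   the twist z^a on (0,a), z^{a+1} on (1,a) that closes the chain, so the twisted trace T(u) Q(u)
   is the sum of the twisted traces of the two diagonal blocks, Q(u q^{\<plusminus>2}) and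
   \<Delta> Q(u q^{\<mp>2}). *)

unbundle fps_syntax

lemma qf_power: "qf ^ k = Fract (monom 1 k) 1"
  unfolding qf_def by (induct k) (auto simp: monom_Suc One_fract_def)

lemma qf_power_eq_1_iff: "qf ^ k = 1 \<longleftrightarrow> k = 0"
  by (simp add: qf_power One_fract_def eq_fract monom_eq_1_iff)

lemma qf_nonzero: "qf \<noteq> 0"
  using qf_power_eq_1_iff[of 1] by (auto simp: qf_def eq_fract Zero_fract_def)

lemma one_minus_qf_power_nonzero: "k > 0 \<Longrightarrow> 1 - qf ^ k \<noteq> 0"
  using qf_power_eq_1_iff[of k] by auto

lemma inverse_qf_sq_qf_sq: "inverse qf ^ 2 * qf ^ 2 = 1"
  using qf_nonzero by (simp add: field_simps)

lemma inverse_qf_sq_power_qf_sq_power: "(inverse qf ^ 2) ^ c * (qf ^ 2) ^ c = 1"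
  and qf_sq_power_inverse_qf_sq_power: "(qf ^ 2) ^ c * (inverse qf ^ 2) ^ c = 1"
  using inverse_qf_sq_qf_sq by (simp_all add: mult.commute flip: power_mult_distrib)

lemma qpoch_0 [simp]: "qpoch 0 = 1"
  unfolding qpoch_def by simp

lemma qpoch_Suc: "qpoch (Suc a) = qpoch a * (1 - qf ^ (2 * Suc a))"
  unfolding qpoch_def by (simp add: prod.nat_ivl_Suc')

lemma qpoch_nonzero: "qpoch a \<noteq> 0"
proof (induct a)
  case (Suc a)
  then show ?case
    using one_minus_qf_power_nonzero[of "2 * Suc a"] by (simp only: qpoch_Suc) simp
qed simp

definition ellp_coeff :: "nat \<Rightarrow> cq" where
  "ellp_coeff a = (- 1) ^ a / qpoch a"

definition ellm_coeff :: "nat \<Rightarrow> cq" where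
  "ellm_coeff a = qf ^ (a * (a + 1)) / qpoch a"

lemma ellp_coeff_Suc: "ellp_coeff (Suc c) = - ellp_coeff c / (1 - qf ^ (2 * Suc c))"
  unfolding ellp_coeff_def qpoch_Suc
  using qpoch_nonzero[of c] one_minus_qf_power_nonzero[of "2 * Suc c"] by (simp add: field_simps)

lemma ellm_coeff_Suc:
  "ellm_coeff (Suc c) = ellm_coeff c * qf ^ (2 * Suc c) / (1 - qf ^ (2 * Suc c))"
proof -
  have "Suc c * (Suc c + 1) = c * (c + 1) + 2 * Suc c" by simp
  then have "qf ^ (Suc c * (Suc c + 1)) = qf ^ (c * (c + 1)) * qf ^ (2 * Suc c)"
    by (simp only: power_add)
  then show ?thesis
    unfolding ellm_coeff_def qpoch_Suc
    using qpoch_nonzero[of c] one_minus_qf_power_nonzero[of "2 * Suc c"] by (simp add: field_simps)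
qed

context
  fixes c :: nat and x :: cq
  defines "x \<equiv> qf ^ (2 * Suc c)"
begin

lemma qf_sq_power_Suc_eq: "(qf ^ 2) ^ Suc c = x" "(inverse qf ^ 2) ^ Suc c = inverse x"
  by (simp_all only: x_def power_mult power_inverse)

lemma x_nonzero: "1 - x \<noteq> 0" "x \<noteq> 0"
  using one_minus_qf_power_nonzero[of "2 * Suc c"] qf_nonzero by (simp_all add: x_def)

lemma ellp_coeff_Suc_cancel: "ellp_coeff (Suc c) * (1 - (qf ^ 2) ^ Suc c) + ellp_coeff c = 0"
  using x_nonzero unfolding qf_sq_power_Suc_eq ellp_coeff_Suc x_def[symmetric]
    by (simp add: field_simps)

lemma ellp_coeff_Suc_add: "ellp_coeff (Suc c) + ellp_coeff c
    = (qf ^ 2) ^ Suc c * ellp_coeff (Suc c)"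
  using x_nonzero unfolding qf_sq_power_Suc_eq ellp_coeff_Suc x_def[symmetric]
    by (simp add: field_simps)

lemma ellm_coeff_Suc_cancel:
  "ellm_coeff (Suc c) * ((qf ^ 2) ^ Suc c - 1) + ellm_coeff c * (qf ^ 2) ^ Suc c = 0"
  using x_nonzero unfolding qf_sq_power_Suc_eq ellm_coeff_Suc x_def[symmetric]
    by (simp add: field_simps)

lemma ellm_coeff_Suc_add:
  "ellm_coeff (Suc c) + ellm_coeff c = (inverse qf ^ 2) ^ Suc c * ellm_coeff (Suc c)"
  using x_nonzero unfolding qf_sq_power_Suc_eq ellm_coeff_Suc x_def[symmetric]
    by (simp add: field_simps)

end

lemma mult_regroup_commuting_left:
  fixes x y z w :: "'a::semigroup_mult"
  assumes "x * y = y * x" "x * z = z * x"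
  shows "x * (y * (z * w)) = (y * z) * (x * w)"
proof -
  have "x * (y * (z * w)) = (x * y) * (z * w)" by (simp only: mult.assoc)
  also have "\<dots> = y * ((x * z) * w)" by (simp only: assms(1) mult.assoc)
  also have "\<dots> = (y * z) * (x * w)" by (simp only: assms(2) mult.assoc)
  finally show ?thesis .
qed

lemma mult_regroup_commuting_right:
  fixes q e l m :: "'a::semigroup_mult"
  assumes "(e * l) * m = m * (e * l)"
  shows "(q * e) * (l * m) = (q * m) * (e * l)"
proof -
  have "(q * e) * (l * m) = q * ((e * l) * m)" by (simp only: mult.assoc)
  also note assms
  also have "q * (m * (e * l)) = (q * m) * (e * l)" by (simp only: mult.assoc)
  finally show ?thesis .
qed

definition fps_monom :: "'a::ring_1 \<Rightarrow> nat \<Rightarrow> 'a fps" where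
  "fps_monom e d = fps_const e * fps_X ^ d"

lemma fps_monom_nth: "fps_monom e d $ k = (if k = d then e else 0)"
  by (simp add: fps_monom_def)

lemma fps_mult_monom_nth: "(F * fps_monom e d) $ k = (if k < d then 0 else F $ (k - d) * e)"
proof -
  have "F * fps_monom e d = (F * fps_const e) * fps_X ^ d" by (simp add: fps_monom_def mult.assoc)
  then show ?thesis by (simp add: fps_X_power_mult_right_nth)
qed

lemma fps_monom_0: "fps_monom 0 d = 0"
  and fps_monom_add: "fps_monom e d + fps_monom e' d = fps_monom (e + e') d"
  and fps_monom_diff: "fps_monom e d - fps_monom e' d = fps_monom (e - e') d"
  and fps_const_mult_monom: "fps_const e * fps_monom e' d = fps_monom (e * e') d"
  and fps_monom_mult_const: "fps_monom e d * fps_const e' = fps_monom (e * e') d"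
  and fps_X_mult_monom: "fps_X * fps_monom e d = fps_monom e (Suc d)"
  and fps_monom_mult_X: "fps_monom e d * fps_X = fps_monom e (Suc d)"
  and fps_scale_monom: "fps_scale c (fps_monom e d) = fps_monom (c ^ d * e) d"
  by (rule fps_ext; auto simp: fps_monom_nth fps_scale_def)+

lemma fps_scale_1: "fps_scale c 1 = 1"
  and fps_scale_0: "fps_scale c 0 = 0"
  by (rule fps_ext; simp add: fps_scale_def)+

lemma fps_scale_const_mult:
  assumes "c * w = w * c"
  shows "fps_scale c (fps_const w * F) = fps_const w * fps_scale c F"
proof (rule fps_ext)
  fix k
  have "c ^ k * (w * F $ k) = w * (c ^ k * F $ k)"
    by (simp only: mult.assoc[symmetric] power_commuting_commutes[OF assms])
  then show "fps_scale c (fps_const w * F) $ k = (fps_const w * fps_scale c F) $ k"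
    by (simp add: fps_scale_def)
qed

lemma fps_scale_mult:
  assumes central: "\<And>x. c * x = x * c"
  shows "fps_scale c (F * G) = fps_scale c F * fps_scale c G"
proof (rule fps_ext)
  fix k
  have "fps_scale c (F * G) $ k = (\<Sum>i=0..k. c ^ k * (F $ i * G $ (k - i)))"
    by (simp add: fps_scale_def fps_mult_nth sum_distrib_left)
  also have "\<dots> = (\<Sum>i=0..k. c ^ i * F $ i * (c ^ (k - i) * G $ (k - i)))"
  proof (rule sum.cong[OF refl])
    fix i assume "i \<in> {0..k}"
    then have "c ^ k = c ^ i * c ^ (k - i)" by (simp flip: power_add)
    moreover have "c ^ (k - i) * (F $ i * G $ (k - i)) = F $ i * (c ^ (k - i) * G $ (k - i))"
      by (simp only: mult.assoc[symmetric]
          power_commuting_commutes[OF central, where n="k - i" and y="F $ i"])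
    ultimately show "c ^ k * (F $ i * G $ (k - i)) = c ^ i * F $ i * (c ^ (k - i) * G $ (k - i))"
      by (simp only: mult.assoc)
  qed
  finally show "fps_scale c (F * G) $ k = (fps_scale c F * fps_scale c G) $ k"
    by (simp add: fps_scale_def fps_mult_nth mult.assoc)
qed

section \<open>Locally finite sums of power series\<close>

definition vanishes_below :: "nat \<Rightarrow> 'a::ring_1 fps \<Rightarrow> bool" where
  "vanishes_below c F \<longleftrightarrow> (\<forall>k<c. F $ k = 0)"

text \<open>Only used for families with \<open>vanishes_below c (f c)\<close>; then the coefficient of \<open>u\<^sup>k\<close>
  of \<open>\<Sum>\<^sub>c f c\<close> only involves \<open>c \<le> k\<close>, and \<open>fps_lsum f\<close> is that sum.\<close>
definition fps_lsum :: "(nat \<Rightarrow> 'a::ring_1 fps) \<Rightarrow> 'a fps" where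
  "fps_lsum f = Abs_fps (\<lambda>k. \<Sum>c\<le>k. f c $ k)"

definition lag :: "(nat \<Rightarrow> 'a) \<Rightarrow> nat \<Rightarrow> 'a::zero" where
  "lag f c = (if c = 0 then 0 else f (c - 1))"

lemma vanishes_below_0 [simp]: "vanishes_below c 0"
  by (simp add: vanishes_below_def)

lemma vanishes_below_monom: "c \<le> d \<Longrightarrow> vanishes_below c (fps_monom e d)"
  by (auto simp: vanishes_below_def fps_monom_nth)

lemma vanishes_below_add: "vanishes_below c F \<Longrightarrow> vanishes_below c G \<Longrightarrow> vanishes_below c (F + G)"
  and vanishes_below_diff: "vanishes_below c F \<Longrightarrow> vanishes_below c G \<Longrightarrow> vanishes_below c (F - G)"
  by (simp_all add: vanishes_below_def)

lemma vanishes_below_mult_left: "vanishes_below c G \<Longrightarrow> vanishes_below c (F * G)"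
  and vanishes_below_mult_right: "vanishes_below c F \<Longrightarrow> vanishes_below c (F * G)"
  unfolding vanishes_below_def fps_mult_nth by (auto intro!: sum.neutral)

lemma vanishes_below_mult:
  assumes F: "vanishes_below i F" and G: "vanishes_below j G"
  shows "vanishes_below (i + j) (F * G)"
  unfolding vanishes_below_def fps_mult_nth
proof (intro allI impI sum.neutral ballI)
  fix k x assume "k < i + j" "x \<in> {0..k}"
  then have "x < i \<or> k - x < j" by auto
  then show "F $ x * G $ (k - x) = 0" using F G by (auto simp: vanishes_below_def)
qed

lemma vanishes_below_lsum: "(\<And>c. vanishes_below d (f c)) \<Longrightarrow> vanishes_below d (fps_lsum f)"
  by (simp add: vanishes_below_def fps_lsum_def)

lemma fps_lsum_nth: "fps_lsum f $ k = (\<Sum>c\<le>k. f c $ k)"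
  by (simp add: fps_lsum_def)

lemma fps_lsum_add: "fps_lsum (\<lambda>c. f c + g c) = fps_lsum f + fps_lsum g"
  and fps_lsum_diff: "fps_lsum (\<lambda>c. f c - g c) = fps_lsum f - fps_lsum g"
  and fps_lsum_zero: "fps_lsum (\<lambda>c. 0) = 0"
  by (rule fps_ext; simp add: fps_lsum_nth sum.distrib sum_subtractf)+

lemma fps_scale_lsum: "fps_scale c (fps_lsum f) = fps_lsum (\<lambda>x. fps_scale c (f x))"
  by (rule fps_ext) (simp add: fps_scale_def fps_lsum_nth sum_distrib_left)

lemma lag_lsum: "lag (\<lambda>a. fps_lsum (f a)) a = fps_lsum (\<lambda>c. lag (\<lambda>a. f a c) a)"
  by (simp add: lag_def fps_lsum_zero)

lemma fps_lsum_mult_left: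
  assumes "\<And>c. vanishes_below c (f c)"
  shows "A * fps_lsum f = fps_lsum (\<lambda>c. A * f c)"
proof (rule fps_ext)
  fix k
  have "(A * fps_lsum f) $ k = (\<Sum>i=0..k. \<Sum>c\<le>k - i. A $ i * f c $ (k - i))"
    by (simp add: fps_mult_nth fps_lsum_nth sum_distrib_left)
  also have "\<dots> = (\<Sum>i=0..k. \<Sum>c\<le>k. A $ i * f c $ (k - i))"
    by (intro sum.cong sum.mono_neutral_left) (use assms in \<open>auto simp: vanishes_below_def\<close>)
  also have "\<dots> = (\<Sum>c\<le>k. \<Sum>i=0..k. A $ i * f c $ (k - i))"
    by (rule sum.swap)
  finally show "(A * fps_lsum f) $ k = fps_lsum (\<lambda>c. A * f c) $ k"
    by (simp add: fps_lsum_nth fps_mult_nth)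
qed

lemma fps_lsum_mult_right:
  assumes "\<And>c. vanishes_below c (f c)"
  shows "fps_lsum f * A = fps_lsum (\<lambda>c. f c * A)"
proof (rule fps_ext)
  fix k
  have "(fps_lsum f * A) $ k = (\<Sum>i=0..k. \<Sum>c\<le>i. f c $ i * A $ (k - i))"
    by (simp add: fps_mult_nth fps_lsum_nth sum_distrib_right)
  also have "\<dots> = (\<Sum>i=0..k. \<Sum>c\<le>k. f c $ i * A $ (k - i))"
    by (intro sum.cong sum.mono_neutral_left) (use assms in \<open>auto simp: vanishes_below_def\<close>)
  also have "\<dots> = (\<Sum>c\<le>k. \<Sum>i=0..k. f c $ i * A $ (k - i))"
    by (rule sum.swap)
  finally show "(fps_lsum f * A) $ k = fps_lsum (\<lambda>c. f c * A) $ k"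
    by (simp add: fps_lsum_nth fps_mult_nth)
qed

lemma fps_lsum_lag:
  assumes "\<And>c. vanishes_below (Suc c) (h c)"
  shows "fps_lsum (lag h) = fps_lsum h"
proof (rule fps_ext)
  fix k
  show "fps_lsum (lag h) $ k = fps_lsum h $ k"
  proof (cases k)
    case 0
    then show ?thesis using assms[of 0] by (simp add: fps_lsum_nth lag_def vanishes_below_def)
  next
    case (Suc k')
    have "fps_lsum (lag h) $ k = (\<Sum>c\<le>k'. h c $ k)"
      unfolding fps_lsum_nth Suc sum.atMost_Suc_shift by (simp add: lag_def)
    also have "\<dots> = (\<Sum>c\<le>k. h c $ k)"
      using assms[of k] by (simp add: Suc vanishes_below_def)
    finally show ?thesis by (simp add: fps_lsum_nth)
  qed
qed

lemma fps_lsum_telescope: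
  assumes "\<And>c. vanishes_below (Suc c) (h c)"
  shows "fps_lsum (\<lambda>c. h c - lag h c) = 0"
  by (simp add: fps_lsum_diff fps_lsum_lag[OF assms])

section \<open>Gauge triangular block kernels\<close>

type_synonym 'a kernel = "nat \<Rightarrow> nat \<Rightarrow> 'a fps"
type_synonym 'a block = "nat \<Rightarrow> nat \<Rightarrow> 'a kernel"

definition kernel_mult :: "'a::ring_1 kernel \<Rightarrow> 'a kernel \<Rightarrow> 'a kernel" where
  "kernel_mult P A a b = fps_lsum (\<lambda>c. P a c * A c b)"

definition block_mult :: "'a::ring_1 block \<Rightarrow> 'a block \<Rightarrow> 'a block" where
  "block_mult X Y r s a b = fps_lsum (\<lambda>c. X r 0 a c * Y 0 s c b + X r 1 a c * Y 1 s c b)"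

text \<open>A block \<open>X r s a c\<close> is an infinite matrix with rows \<open>(r, a)\<close> and columns \<open>(s, c)\<close>.
  Let \<open>U\<close> add row \<open>(1, a - 1)\<close> to row \<open>(0, a)\<close>, so that \<open>U\<^sup>-\<^sup>1\<close> subtracts column
  \<open>(0, c + 1)\<close> from column \<open>(1, c)\<close>. The three conditions say that \<open>U X U\<^sup>-\<^sup>1\<close> has
  diagonal blocks \<open>P\<close> and \<open>R\<close> and a vanishing upper right block.\<close>
definition gauge_triangular :: "'a::ring_1 block \<Rightarrow> 'a kernel \<Rightarrow> 'a kernel \<Rightarrow> bool" where
  "gauge_triangular X P R \<longleftrightarrow>
     (\<forall>a c. X 0 0 a c + lag (\<lambda>a. X 1 0 a c) a = P a c) \<and>
     (\<forall>a c. X 1 1 a c - X 1 0 a (Suc c) = R a c) \<and>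
     (\<forall>a c. X 0 1 a c - X 0 0 a (Suc c) + lag (\<lambda>a. X 1 1 a c) a - lag (\<lambda>a. X 1 0 a (Suc c)) a = 0)"

lemma gauge_triangularD:
  assumes "gauge_triangular X P R"
  shows "X 0 0 a c + lag (\<lambda>a. X 1 0 a c) a = P a c"
    and "X 1 1 a c - X 1 0 a (Suc c) = R a c"
    and "X 0 1 a c - X 0 0 a (Suc c) + lag (\<lambda>a. X 1 1 a c) a - lag (\<lambda>a. X 1 0 a (Suc c)) a = 0"
  using assms unfolding gauge_triangular_def by blast+

lemma gauge_triangular_diag0_Suc:
  assumes "gauge_triangular X P R"
  shows "P a (Suc c) = X 0 1 a c + lag (\<lambda>a. X 1 1 a c) a"
  using gauge_triangularD(1)[OF assms, of a "Suc c"] gauge_triangularD(3)[OF assms, of a c]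
  by (simp add: algebra_simps)

lemma gauge_triangular_lag_diag1:
  assumes "gauge_triangular X P R"
  shows "- lag (\<lambda>a. R a c) a = X 0 1 a c - X 0 0 a (Suc c)"
proof (cases a)
  case 0
  then show ?thesis using gauge_triangularD(3)[OF assms, of a c] by (simp add: lag_def)
next
  case (Suc a')
  then show ?thesis
    using gauge_triangularD(3)[OF assms, of a c] gauge_triangularD(2)[OF assms, of a' c]
    by (simp add: lag_def algebra_simps)
qed

lemma lag_add: "lag (\<lambda>a. f a + g a) a = lag f a + lag g a"
  and lag_mult_right: "lag (\<lambda>a. f a * x) a = lag f a * x"
  and mult_lag: "F c * lag g c = lag (\<lambda>c. F (Suc c) * g c) c"
  for f g :: "nat \<Rightarrow> 'a::ring"
  by (simp_all add: lag_def)

lemma block_mult_diag0: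
  assumes X: "gauge_triangular X P R" and Y: "gauge_triangular Y A B"
    and vanish: "\<And>c b. vanishes_below (Suc c) (Y 1 0 c b)"
  shows "block_mult X Y 0 0 a b + lag (\<lambda>a. block_mult X Y 1 0 a b) a = kernel_mult P A a b"
proof -
  define h where "h c = P a (Suc c) * Y 1 0 c b" for c
  have expand: "(X 0 0 a c * Y 0 0 c b + X 0 1 a c * Y 1 0 c b)
      + (lag (\<lambda>a. X 1 0 a c) a * Y 0 0 c b + lag (\<lambda>a. X 1 1 a c) a * Y 1 0 c b)
      - P a c * A c b = h c - lag h c" for c
  proof -
    have "(X 0 0 a c * Y 0 0 c b + X 0 1 a c * Y 1 0 c b)
        + (lag (\<lambda>a. X 1 0 a c) a * Y 0 0 c b + lag (\<lambda>a. X 1 1 a c) a * Y 1 0 c b)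
        - (X 0 0 a c + lag (\<lambda>a. X 1 0 a c) a) * (Y 0 0 c b + lag (\<lambda>c. Y 1 0 c b) c)
      = (X 0 1 a c + lag (\<lambda>a. X 1 1 a c) a) * Y 1 0 c b
        - (X 0 0 a c + lag (\<lambda>a. X 1 0 a c) a) * lag (\<lambda>c. Y 1 0 c b) c"
      by (simp add: algebra_simps)
    then show ?thesis
      unfolding h_def gauge_triangularD(1)[OF X] gauge_triangularD(1)[OF Y]
        gauge_triangular_diag0_Suc[OF X, symmetric] mult_lag .
  qed
  have "block_mult X Y 0 0 a b + lag (\<lambda>a. block_mult X Y 1 0 a b) a - kernel_mult P A a b
      = fps_lsum (\<lambda>c. (X 0 0 a c * Y 0 0 c b + X 0 1 a c * Y 1 0 c b)
      + (lag (\<lambda>a. X 1 0 a c) a * Y 0 0 c b + lag (\<lambda>a. X 1 1 a c) a * Y 1 0 c b)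
      - P a c * A c b)"
    unfolding block_mult_def kernel_mult_def lag_lsum fps_lsum_add fps_lsum_diff lag_add
      lag_mult_right ..
  also have "\<dots> = 0"
    unfolding expand
    unfolding h_def by (intro fps_lsum_telescope vanishes_below_mult_left vanish)
  finally show ?thesis by simp
qed

lemma gauge_triangular_vanishes_diag1:
  assumes Y: "gauge_triangular Y A B"
    and vanish10: "\<And>c b. vanishes_below (Suc c) (Y 1 0 c b)"
    and vanish11: "\<And>c b. vanishes_below (Suc c) (Y 1 1 c b)"
  shows "vanishes_below (Suc c) (B c b)"
  unfolding gauge_triangularD(2)[OF Y, symmetric] by (intro vanishes_below_diff vanish10 vanish11)

lemma block_mult_diag1:
  assumes X: "gauge_triangular X P R" and Y: "gauge_triangular Y A B"
    and vanish: "\<And>c. vanishes_below (Suc c) (B c b)"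
  shows "block_mult X Y 1 1 a b - block_mult X Y 1 0 a (Suc b) = kernel_mult R B a b"
proof -
  define h where "h c = X 1 0 a (Suc c) * B c b" for c
  have expand: "(X 1 0 a c * Y 0 1 c b + X 1 1 a c * Y 1 1 c b)
      - (X 1 0 a c * Y 0 0 c (Suc b) + X 1 1 a c * Y 1 0 c (Suc b))
      - R a c * B c b = h c - lag h c" for c
  proof -
    have "(X 1 0 a c * Y 0 1 c b + X 1 1 a c * Y 1 1 c b)
        - (X 1 0 a c * Y 0 0 c (Suc b) + X 1 1 a c * Y 1 0 c (Suc b))
        - (X 1 1 a c - X 1 0 a (Suc c)) * (Y 1 1 c b - Y 1 0 c (Suc b))
      = X 1 0 a (Suc c) * (Y 1 1 c b - Y 1 0 c (Suc b))
        - X 1 0 a c * (- (Y 0 1 c b - Y 0 0 c (Suc b)))"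
      by (simp add: algebra_simps)
    then show ?thesis
      unfolding h_def gauge_triangularD(2)[OF X] gauge_triangularD(2)[OF Y]
        gauge_triangular_lag_diag1[OF Y, symmetric] minus_minus mult_lag .
  qed
  have "block_mult X Y 1 1 a b - block_mult X Y 1 0 a (Suc b) - kernel_mult R B a b
      = fps_lsum (\<lambda>c. (X 1 0 a c * Y 0 1 c b + X 1 1 a c * Y 1 1 c b)
      - (X 1 0 a c * Y 0 0 c (Suc b) + X 1 1 a c * Y 1 0 c (Suc b))
      - R a c * B c b)"
    unfolding block_mult_def kernel_mult_def fps_lsum_diff ..
  also have "\<dots> = 0"
    unfolding expand h_def by (intro fps_lsum_telescope vanishes_below_mult_left vanish)
  finally show ?thesis by simp
qed

lemma block_mult_offdiag:
  assumes X: "gauge_triangular X P R" and Y: "gauge_triangular Y A B"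
    and vanish: "\<And>c. vanishes_below (Suc c) (B c b)"
  shows "block_mult X Y 0 1 a b - block_mult X Y 0 0 a (Suc b)
    + lag (\<lambda>a. block_mult X Y 1 1 a b) a - lag (\<lambda>a. block_mult X Y 1 0 a (Suc b)) a = 0"
proof -
  define h where "h c = P a (Suc c) * B c b" for c
  have expand: "(X 0 0 a c * Y 0 1 c b + X 0 1 a c * Y 1 1 c b)
      - (X 0 0 a c * Y 0 0 c (Suc b) + X 0 1 a c * Y 1 0 c (Suc b))
      + (lag (\<lambda>a. X 1 0 a c) a * Y 0 1 c b + lag (\<lambda>a. X 1 1 a c) a * Y 1 1 c b)
      - (lag (\<lambda>a. X 1 0 a c) a * Y 0 0 c (Suc b) + lag (\<lambda>a. X 1 1 a c) a * Y 1 0 c (Suc b))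
      = h c - lag h c" for c
  proof -
    have "(X 0 0 a c * Y 0 1 c b + X 0 1 a c * Y 1 1 c b)
        - (X 0 0 a c * Y 0 0 c (Suc b) + X 0 1 a c * Y 1 0 c (Suc b))
        + (lag (\<lambda>a. X 1 0 a c) a * Y 0 1 c b + lag (\<lambda>a. X 1 1 a c) a * Y 1 1 c b)
        - (lag (\<lambda>a. X 1 0 a c) a * Y 0 0 c (Suc b) + lag (\<lambda>a. X 1 1 a c) a * Y 1 0 c (Suc b))
      = (X 0 1 a c + lag (\<lambda>a. X 1 1 a c) a) * (Y 1 1 c b - Y 1 0 c (Suc b))
        - (X 0 0 a c + lag (\<lambda>a. X 1 0 a c) a) * (- (Y 0 1 c b - Y 0 0 c (Suc b)))"
      by (simp add: algebra_simps)
    then show ?thesis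
      unfolding h_def gauge_triangularD(1)[OF X] gauge_triangularD(2)[OF Y]
        gauge_triangular_lag_diag1[OF Y, symmetric] minus_minus
        gauge_triangular_diag0_Suc[OF X, symmetric] mult_lag .
  qed
  have "block_mult X Y 0 1 a b - block_mult X Y 0 0 a (Suc b)
      + lag (\<lambda>a. block_mult X Y 1 1 a b) a - lag (\<lambda>a. block_mult X Y 1 0 a (Suc b)) a
    = fps_lsum (\<lambda>c. (X 0 0 a c * Y 0 1 c b + X 0 1 a c * Y 1 1 c b)
      - (X 0 0 a c * Y 0 0 c (Suc b) + X 0 1 a c * Y 1 0 c (Suc b))
      + (lag (\<lambda>a. X 1 0 a c) a * Y 0 1 c b + lag (\<lambda>a. X 1 1 a c) a * Y 1 1 c b)
      - (lag (\<lambda>a. X 1 0 a c) a * Y 0 0 c (Suc b) + lag (\<lambda>a. X 1 1 a c) a * Y 1 0 c (Suc b)))"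
    unfolding block_mult_def lag_lsum fps_lsum_add fps_lsum_diff lag_add lag_mult_right ..
  also have "\<dots> = 0"
    unfolding expand h_def by (intro fps_lsum_telescope vanishes_below_mult_left vanish)
  finally show ?thesis .
qed

lemma gauge_triangular_block_mult:
  assumes X: "gauge_triangular X P R" and Y: "gauge_triangular Y A B"
    and vanish10: "\<And>c b. vanishes_below (Suc c) (Y 1 0 c b)"
    and vanish11: "\<And>c b. vanishes_below (Suc c) (Y 1 1 c b)"
  shows "gauge_triangular (block_mult X Y) (kernel_mult P A) (kernel_mult R B)"
  using block_mult_diag0[OF X Y vanish10] block_mult_offdiag[OF X Y]
    block_mult_diag1[OF X Y] gauge_triangular_vanishes_diag1[OF Y vanish10 vanish11]
  unfolding gauge_triangular_def by blast

lemma gauge_triangular_chain: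
  assumes "gauge_triangular (W 0) (P 0) (R 0)"
    and "\<And>j. j < n \<Longrightarrow> W (Suc j) = block_mult (W j) (G (Suc j))"
    and "\<And>j. j < n \<Longrightarrow> P (Suc j) = kernel_mult (P j) (A (Suc j))"
    and "\<And>j. j < n \<Longrightarrow> R (Suc j) = kernel_mult (R j) (B (Suc j))"
    and "\<And>j. j < n \<Longrightarrow> gauge_triangular (G (Suc j)) (A (Suc j)) (B (Suc j))"
    and "\<And>j c b. j < n \<Longrightarrow> vanishes_below (Suc c) (G (Suc j) 1 0 c b)"
    and "\<And>j c b. j < n \<Longrightarrow> vanishes_below (Suc c) (G (Suc j) 1 1 c b)"
  shows "gauge_triangular (W n) (P n) (R n)"
  using assms
proof (induction n)
  case (Suc n)
  then have "gauge_triangular (W n) (P n) (R n)" by simp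
  with Suc.prems show ?case by (simp add: gauge_triangular_block_mult)
qed simp

text \<open>The twist \<open>z\<^sup>a\<close> on row \<open>(0, a)\<close> and \<open>z\<^sup>a\<^sup>+\<^sup>1\<close> on row \<open>(1, a)\<close> commutes with the
  gauge \<open>U\<close>, so the twisted trace only sees the diagonal blocks.\<close>
lemma gauge_triangular_twisted_trace:
  fixes z :: "'a::ring_1"
  assumes X: "gauge_triangular X P R"
    and vanish: "\<And>a. vanishes_below (Suc a) (X 1 0 a (Suc a))"
  shows "fps_lsum (\<lambda>a. fps_const (z ^ a) * X 0 0 a a + fps_const (z ^ Suc a) * X 1 1 a a)
    = fps_lsum (\<lambda>a. fps_const (z ^ a) * P a a) + fps_lsum (\<lambda>a. fps_const (z ^ Suc a) * R a a)"
proof -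
  define h where "h a = fps_const (z ^ Suc a) * X 1 0 a (Suc a)" for a
  have lag_h: "fps_const (z ^ a) * lag (\<lambda>a'. X 1 0 a' a) a = lag h a" for a
    by (simp add: h_def lag_def)
  have "fps_const (z ^ a) * X 0 0 a a + fps_const (z ^ Suc a) * X 1 1 a a
      = (fps_const (z ^ a) * P a a + fps_const (z ^ Suc a) * R a a) + (h a - lag h a)" for a
  proof -
    have "X 0 0 a a = P a a - lag (\<lambda>a'. X 1 0 a' a) a" "X 1 1 a a = R a a + X 1 0 a (Suc a)"
      using gauge_triangularD(1,2)[OF X, of a a] by (simp_all add: algebra_simps)
    then show ?thesis
      unfolding h_def lag_h[symmetric] by (simp only:) (simp add: algebra_simps)
  qed
  then have "fps_lsum (\<lambda>a. fps_const (z ^ a) * X 0 0 a a + fps_const (z ^ Suc a) * X 1 1 a a)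
      = fps_lsum (\<lambda>a. fps_const (z ^ a) * P a a + fps_const (z ^ Suc a) * R a a)
        + fps_lsum (\<lambda>a. h a - lag h a)"
    by (simp only: fps_lsum_add)
  also have "fps_lsum (\<lambda>a. h a - lag h a) = 0"
    unfolding h_def by (intro fps_lsum_telescope vanishes_below_mult_left vanish)
  finally show ?thesis by (simp add: fps_lsum_add)
qed

section \<open>Relations at a single site\<close>

locale qboson_algebra =
  fixes n :: nat and emb :: "cq \<Rightarrow> 'a::ring_1"
    and beta betas K Kinv :: "nat \<Rightarrow> 'a" and z :: 'a
  assumes qboson_alg: "qboson_alg n emb beta betas K Kinv z"
begin

lemma emb_0 [simp]: "emb 0 = 0" and emb_1 [simp]: "emb 1 = 1"
  and emb_add: "emb (a + b) = emb a + emb b" and emb_mult: "emb (a * b) = emb a * emb b"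
  and emb_central: "emb c * x = x * emb c" and z_central: "z * x = x * z"
  using qboson_alg unfolding qboson_alg_def by blast+

lemma emb_minus: "emb (- a) = - emb a"
  using emb_add[of a "- a"] minus_unique[of "emb a" "emb (- a)"] by simp

lemma emb_diff: "emb (a - b) = emb a - emb b"
  using emb_add[of a "- b"] by (simp add: emb_minus)

lemma emb_power: "emb (a ^ k) = emb a ^ k"
  by (induct k) (simp_all add: emb_mult)

lemma emb_power_left: "x * (emb c ^ k * y) = emb c ^ k * (x * y)"
  by (metis power_commuting_commutes[OF emb_central] mult.assoc)

lemma emb_left: "x * (emb c * y) = emb c * (x * y)"
  by (metis emb_central mult.assoc)

lemma fps_const_emb_commute: "fps_const (emb c) * F = F * fps_const (emb c)"
  by (rule fps_ext) (simp only: fps_mult_left_const_nth fps_mult_right_const_nth emb_central)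

lemma fps_const_z_power_commute: "fps_const (z ^ k) * F = F * fps_const (z ^ k)"
  by (rule fps_ext)
    (simp only: fps_mult_left_const_nth fps_mult_right_const_nth
      power_commuting_commutes[OF z_central])

lemma qboson_relations:
  assumes "i \<in> {1..n}" "j \<in> {1..n}"
  shows "K i * beta j = emb (if i = j then inverse qf else 1) * beta j * K i \<and>
    K i * betas j = emb (if i = j then qf else 1) * betas j * K i \<and>
    beta i * betas j - betas j * beta i = (if i = j then emb (1 - qf ^ 2) * K i ^ 2 else 0) \<and>
    beta i * betas i - emb (qf ^ 2) * betas i * beta i = emb (1 - qf ^ 2) \<and>
    (i \<noteq> j \<longrightarrow> beta i * beta j = beta j * beta i \<and> betas i * betas j = betas j * betas i \<and>
      beta i * betas j = betas j * beta i)"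
  using qboson_alg assms unfolding qboson_alg_def by blast

lemma site_relations:
  assumes "i \<in> {1..n}"
  shows "K i * beta i = emb (inverse qf) * beta i * K i"
    and "K i * betas i = emb qf * betas i * K i"
    and "beta i * betas i - betas i * beta i = emb (1 - qf ^ 2) * K i ^ 2"
    and "beta i * betas i - emb (qf ^ 2) * betas i * beta i = emb (1 - qf ^ 2)"
  using qboson_relations[OF assms assms] unfolding if_P[OF refl] by blast+

lemma distinct_sites_commute:
  assumes "i \<in> {1..n}" "j \<in> {1..n}" "i \<noteq> j"
    and "g \<in> {beta i, betas i, K i}" "h \<in> {beta j, betas j, K j}"
  shows "g * h = h * g"
proof -
  have "K i * K j = K j * K i"
    using qboson_alg assms(1,2) unfolding qboson_alg_def by blast
  then show ?thesis
    using assms(3-5) qboson_relations[OF assms(1,2)] qboson_relations[OF assms(2,1)] by auto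
qed

abbreviation "q2 \<equiv> emb (qf ^ 2)"
abbreviation "q2inv \<equiv> emb (inverse qf ^ 2)"

lemma q2inv_q2: "q2inv * q2 = 1"
  by (simp only: emb_mult[symmetric] inverse_qf_sq_qf_sq emb_1)

lemma q2_q2inv: "q2 * q2inv = 1"
  by (simp only: emb_mult[symmetric] mult.commute[of "qf ^ 2"] inverse_qf_sq_qf_sq emb_1)

abbreviation "lplus \<equiv> ellp emb beta betas"
abbreviation "lminus \<equiv> ellm emb beta betas"

lemma lplus_eq: "lplus i a b = emb (ellp_coeff a) * (betas i ^ a * beta i ^ b)"
  by (simp add: ellp_def ellp_coeff_def mult.assoc)

lemma lminus_eq: "lminus i a b = emb (ellm_coeff a) * (beta i ^ b * betas i ^ a)"
  by (simp add: ellm_def ellm_coeff_def mult.assoc)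

context
  fixes i assumes i: "i \<in> {1..n}"
begin

lemma betas_beta: "betas i * beta i = 1 - K i ^ 2"
proof -
  have "(beta i * betas i - q2 * betas i * beta i) - (beta i * betas i - betas i * beta i)
      = emb (1 - qf ^ 2) - emb (1 - qf ^ 2) * K i ^ 2"
    using site_relations(3,4)[OF i] by simp
  then have "betas i * beta i - q2 * (betas i * beta i) = emb (1 - qf ^ 2) * (1 - K i ^ 2)"
    by (simp add: algebra_simps)
  then have "emb (1 - qf ^ 2) * (betas i * beta i) = emb (1 - qf ^ 2) * (1 - K i ^ 2)"
    by (simp add: emb_diff algebra_simps)
  then have "emb (inverse (1 - qf ^ 2)) * emb (1 - qf ^ 2) * (betas i * beta i)
      = emb (inverse (1 - qf ^ 2)) * emb (1 - qf ^ 2) * (1 - K i ^ 2)"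
    by (simp only: mult.assoc)
  moreover have "1 - qf ^ 2 \<noteq> 0" by (rule one_minus_qf_power_nonzero) simp
  ultimately show ?thesis by (simp flip: emb_mult)
qed

lemma beta_betas: "beta i * betas i = 1 - q2 * K i ^ 2"
  using site_relations(3)[OF i] by (simp add: betas_beta emb_diff algebra_simps)

lemma K_sq_betas: "K i ^ 2 * betas i = q2 * betas i * K i ^ 2"
proof -
  have "K i ^ 2 * betas i = K i * (K i * betas i)" by (simp add: power2_eq_square mult.assoc)
  also have "\<dots> = K i * (emb qf * betas i * K i)"
    by (simp add: site_relations(2)[OF i])
  also have "\<dots> = emb qf * (K i * betas i) * K i"
    by (metis emb_central mult.assoc)
  also have "\<dots> = emb qf * emb qf * betas i * (K i * K i)"
    by (simp add: site_relations(2)[OF i] mult.assoc)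
  finally show ?thesis by (simp add: emb_mult[symmetric] power2_eq_square)
qed

lemma K_sq_beta: "K i ^ 2 * beta i = q2inv * beta i * K i ^ 2"
proof -
  have "K i ^ 2 * beta i = K i * (K i * beta i)" by (simp add: power2_eq_square mult.assoc)
  also have "\<dots> = K i * (emb (inverse qf) * beta i * K i)"
    by (simp add: site_relations(1)[OF i])
  also have "\<dots> = emb (inverse qf) * (K i * beta i) * K i"
    by (metis emb_central mult.assoc)
  also have "\<dots> = emb (inverse qf) * emb (inverse qf) * beta i * (K i * K i)"
    by (simp add: site_relations(1)[OF i] mult.assoc)
  finally show ?thesis by (simp add: emb_mult[symmetric] power2_eq_square)
qed

lemma betas_K_sq: "betas i * K i ^ 2 = q2inv * K i ^ 2 * betas i"
proof -
  have "q2inv * K i ^ 2 * betas i = q2inv * q2 * betas i * K i ^ 2"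
    by (simp add: K_sq_betas mult.assoc)
  then show ?thesis by (simp add: q2inv_q2)
qed

lemma beta_K_sq: "beta i * K i ^ 2 = q2 * K i ^ 2 * beta i"
proof -
  have "q2 * K i ^ 2 * beta i = q2 * q2inv * beta i * K i ^ 2"
    by (simp add: K_sq_beta mult.assoc)
  then show ?thesis by (simp add: q2_q2inv)
qed

lemma betas_power_K_sq: "betas i ^ c * K i ^ 2 = q2inv ^ c * K i ^ 2 * betas i ^ c"
proof (induct c)
  case (Suc c)
  have "betas i ^ Suc c * K i ^ 2 = q2inv ^ c * (betas i * K i ^ 2) * betas i ^ c"
    by (simp only: power_Suc mult.assoc Suc emb_power_left)
  also have "\<dots> = q2inv ^ Suc c * K i ^ 2 * betas i ^ Suc c"
    by (simp only: betas_K_sq mult.assoc power_Suc2[of q2inv] power_Suc[of "betas i"])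
  finally show ?case .
qed simp

lemma beta_power_K_sq: "beta i ^ c * K i ^ 2 = q2 ^ c * K i ^ 2 * beta i ^ c"
proof (induct c)
  case (Suc c)
  have "beta i ^ Suc c * K i ^ 2 = q2 ^ c * (beta i * K i ^ 2) * beta i ^ c"
    by (simp only: power_Suc mult.assoc Suc emb_power_left)
  also have "\<dots> = q2 ^ Suc c * K i ^ 2 * beta i ^ Suc c"
    by (simp only: beta_K_sq mult.assoc power_Suc2[of q2] power_Suc[of "beta i"])
  finally show ?case .
qed simp

lemma beta_betas_power_Suc: "beta i * betas i ^ Suc c = betas i ^ c * (1 - q2 ^ Suc c * K i ^ 2)"
proof (induct c)
  case 0
  then show ?case by (simp add: beta_betas)
next
  case (Suc c)
  have "beta i * betas i ^ Suc (Suc c) = (beta i * betas i ^ Suc c) * betas i"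
    by (simp only: power_Suc2 mult.assoc)
  also have "\<dots> = betas i ^ c * (1 - q2 ^ Suc c * K i ^ 2) * betas i"
    by (simp only: Suc)
  also have "\<dots> = betas i ^ c * betas i - betas i ^ c * (q2 ^ Suc c * (K i ^ 2 * betas i))"
    by (simp add: algebra_simps)
  also have "\<dots> = betas i ^ c * betas i - betas i ^ c * (q2 ^ Suc c * (q2 * betas i * K i ^ 2))"
    by (simp only: K_sq_betas)
  also have "q2 ^ Suc c * (q2 * betas i * K i ^ 2) = q2 ^ Suc (Suc c) * (betas i * K i ^ 2)"
    by (simp only: power_Suc2 mult.assoc)
  also have "betas i ^ c * (q2 ^ Suc (Suc c) * (betas i * K i ^ 2))
      = q2 ^ Suc (Suc c) * (betas i ^ c * (betas i * K i ^ 2))"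
    by (rule emb_power_left)
  also have "\<dots> = betas i ^ Suc c * (q2 ^ Suc (Suc c) * K i ^ 2)"
    by (subst emb_power_left) (simp only: power_Suc2[of "betas i"] mult.assoc)
  finally show ?case by (simp only: right_diff_distrib mult_1_right power_Suc2)
qed

lemma betas_power_Suc_beta: "betas i ^ Suc c * beta i = betas i ^ c * (1 - K i ^ 2)"
  by (simp only: power_Suc2 mult.assoc betas_beta)

lemma betas_power_Suc_beta_power_Suc:
  "betas i ^ Suc c * beta i ^ Suc b = betas i ^ c * ((1 - K i ^ 2) * beta i ^ b)"
  by (simp only: power_Suc2[of "betas i"] power_Suc[of "beta i"] mult.assoc betas_beta
      flip: mult.assoc[of "betas i" "beta i"])

lemma beta_power_Suc_betas_power_Suc:
  "beta i ^ Suc b * betas i ^ Suc c = beta i ^ b * (betas i ^ c * (1 - q2 ^ Suc c * K i ^ 2))"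
  by (simp only: power_Suc2[of "beta i"] mult.assoc beta_betas_power_Suc)

lemma lplus_diag0: "lplus i (Suc c) b + betas i * lplus i c b
    = q2 ^ Suc c * lplus i (Suc c) b"
proof -
  let ?M = "betas i ^ Suc c * beta i ^ b"
  have "betas i * lplus i c b = emb (ellp_coeff c) * ?M"
    by (simp only: lplus_eq emb_left power_Suc mult.assoc)
  then have "lplus i (Suc c) b + betas i * lplus i c b
      = emb (ellp_coeff (Suc c) + ellp_coeff c) * ?M"
    by (simp add: lplus_eq emb_add distrib_right)
  also have "\<dots>
      = emb ((qf ^ 2) ^ Suc c * ellp_coeff (Suc c)) * ?M" by (simp only: ellp_coeff_Suc_add)
  also have "\<dots> = q2 ^ Suc c * lplus i (Suc c) b"
    by (simp only: lplus_eq emb_mult emb_power mult.assoc)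
  finally show ?thesis .
qed

lemma lplus_sub_betas_lplus_Suc: "lplus i c b - betas i * lplus i c (Suc b)
    = emb (ellp_coeff c) * (betas i ^ c * K i ^ 2 * beta i ^ b)"
proof -
  have "betas i * lplus i c (Suc b)
      = emb (ellp_coeff c) * (betas i ^ c * ((1 - K i ^ 2) * beta i ^ b))"
  proof -
    have "betas i * (betas i ^ c * beta i ^ Suc b) = betas i ^ Suc c * beta i ^ Suc b"
      by (simp only: mult.assoc[symmetric] power_Suc)
    then show ?thesis by (simp only: lplus_eq emb_left betas_power_Suc_beta_power_Suc)
  qed
  then show ?thesis
    by (simp add: lplus_eq algebra_simps)
qed

lemma lplus_diag1: "lplus i c b - betas i * lplus i c (Suc b)
    = K i ^ 2 * (q2inv ^ c * lplus i c b)"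
proof -
  have "lplus i c b - betas i * lplus i c (Suc b)
      = emb (ellp_coeff c) * (q2inv ^ c * (K i ^ 2 * (betas i ^ c * beta i ^ b)))"
    by (simp only: lplus_sub_betas_lplus_Suc betas_power_K_sq mult.assoc)
  also have "\<dots> = K i ^ 2 * (q2inv ^ c * lplus i c b)"
    by (simp only: lplus_eq emb_power_left[of "K i ^ 2"] emb_left[of "K i ^ 2"]
        emb_power_left[of "emb (ellp_coeff c)"])
  finally show ?thesis .
qed

lemma lplus_offdiag_0: "beta i * lplus i 0 b - lplus i 0 (Suc b) = 0"
  by (simp add: lplus_eq ellp_coeff_def)

lemma lplus_offdiag_Suc:
  "beta i * lplus i (Suc c) b - lplus i (Suc c) (Suc b)
    + (lplus i c b - betas i * lplus i c (Suc b)) = 0"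
proof -
  let ?s = "emb (ellp_coeff (Suc c))" and ?M = "betas i ^ c * (K i ^ 2 * beta i ^ b)"
  have beta_lplus: "beta i * lplus i (Suc c) b
      = ?s * (betas i ^ c * ((1 - q2 ^ Suc c * K i ^ 2) * beta i ^ b))"
  proof -
    have "beta i * (betas i ^ Suc c * beta i ^ b) = (beta i * betas i ^ Suc c) * beta i ^ b"
      by (simp only: mult.assoc)
    then show ?thesis by (simp only: lplus_eq emb_left beta_betas_power_Suc mult.assoc)
  qed
  have lplus_Suc: "lplus i (Suc c) (Suc b) = ?s * (betas i ^ c * ((1 - K i ^ 2) * beta i ^ b))"
    by (simp only: lplus_eq betas_power_Suc_beta_power_Suc)
  have "betas i ^ c * ((1 - q2 ^ Suc c * K i ^ 2) * beta i ^ b)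
      - betas i ^ c * ((1 - K i ^ 2) * beta i ^ b)
      = betas i ^ c * (K i ^ 2 * beta i ^ b) - betas i ^ c * (q2 ^ Suc c * (K i ^ 2 * beta i ^ b))"
    by (simp add: algebra_simps)
  also have "\<dots> = (1 - q2 ^ Suc c) * ?M"
    by (simp only: emb_power_left[of "betas i ^ c"] left_diff_distrib mult_1_left)
  finally have "beta i * lplus i (Suc c) b - lplus i (Suc c) (Suc b)
      = emb (ellp_coeff (Suc c) * (1 - (qf ^ 2) ^ Suc c)) * ?M"
    unfolding beta_lplus lplus_Suc
    by (simp only: emb_mult emb_diff emb_1 emb_power mult.assoc flip: right_diff_distrib)
  moreover have "lplus i c b - betas i * lplus i c (Suc b) = emb (ellp_coeff c) * ?M"
    by (simp only: lplus_sub_betas_lplus_Suc mult.assoc)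
  ultimately show ?thesis
    by (simp only: emb_add[symmetric] distrib_right[symmetric] ellp_coeff_Suc_cancel emb_0
        mult_zero_left)
qed

lemma lminus_mult_betas: "lminus i c b * betas i
    = emb (ellm_coeff c) * (beta i ^ b * betas i ^ Suc c)"
  by (simp only: lminus_eq mult.assoc power_Suc2)

lemma lminus_Suc_mult_betas: "lminus i c (Suc b) * betas i
    = emb (ellm_coeff c) * (beta i ^ b * (betas i ^ c * (1 - q2 ^ Suc c * K i ^ 2)))"
  by (simp only: lminus_mult_betas beta_power_Suc_betas_power_Suc)

lemma lminus_diag0: "lminus i (Suc c) b + lminus i c b * betas i
    = q2inv ^ Suc c * lminus i (Suc c) b"
proof -
  let ?M = "beta i ^ b * betas i ^ Suc c"
  have "lminus i (Suc c) b + lminus i c b * betas i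
      = emb (ellm_coeff (Suc c) + ellm_coeff c) * ?M"
    unfolding lminus_mult_betas by (simp only: lminus_eq emb_add distrib_right)
  also have "\<dots>
      = emb ((inverse qf ^ 2) ^ Suc c * ellm_coeff (Suc c)) * ?M" by (simp only: ellm_coeff_Suc_add)
  also have "\<dots> = q2inv ^ Suc c * lminus i (Suc c) b"
    by (simp only: lminus_eq emb_mult emb_power mult.assoc)
  finally show ?thesis .
qed

lemma lminus_sub_lminus_Suc_betas: "lminus i c b - lminus i c (Suc b) * betas i
    = emb (ellm_coeff c * (qf ^ 2) ^ Suc c) * (beta i ^ b * (betas i ^ c * K i ^ 2))"
proof -
  have "beta i ^ b * betas i ^ c - beta i ^ b * (betas i ^ c * (1 - q2 ^ Suc c * K i ^ 2))
      = beta i ^ b * (betas i ^ c * (q2 ^ Suc c * K i ^ 2))"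
  proof -
    have "betas i ^ c - betas i ^ c * (1 - q2 ^ Suc c * K i ^ 2)
        = betas i ^ c * (q2 ^ Suc c * K i ^ 2)"
      by (simp add: right_diff_distrib)
    then show ?thesis by (simp only: right_diff_distrib[of "beta i ^ b", symmetric])
  qed
  also have "\<dots> = q2 ^ Suc c * (beta i ^ b * (betas i ^ c * K i ^ 2))"
    by (simp only: emb_power_left[of "betas i ^ c"] emb_power_left[of "beta i ^ b"])
  finally have d: "beta i ^ b * betas i ^ c - beta i ^ b *
      (betas i ^ c * (1 - q2 ^ Suc c * K i ^ 2))
      = q2 ^ Suc c * (beta i ^ b * (betas i ^ c * K i ^ 2))" .
  then have "lminus i c b - lminus i c (Suc b) * betas i
      = emb (ellm_coeff c) * (q2 ^ Suc c * (beta i ^ b * (betas i ^ c * K i ^ 2)))"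
    unfolding lminus_Suc_mult_betas
    by (simp only: lminus_eq right_diff_distrib[of "emb (ellm_coeff c)", symmetric])
  then show ?thesis by (simp only: emb_mult emb_power[of "qf ^ 2"] mult.assoc)
qed

lemma beta_power_betas_power_K_sq: "beta i ^ b * (betas i ^ c * K i ^ 2)
    = emb ((inverse qf ^ 2) ^ c * (qf ^ 2) ^ b) * (K i ^ 2 * (beta i ^ b * betas i ^ c))"
proof -
  have "beta i ^ b * (betas i ^ c * K i ^ 2) = beta i ^ b * (q2inv ^ c * (K i ^ 2 * betas i ^ c))"
    by (simp only: betas_power_K_sq mult.assoc)
  also have "\<dots> = q2inv ^ c * ((beta i ^ b * K i ^ 2) * betas i ^ c)"
    by (simp only: emb_power_left[of "beta i ^ b"] mult.assoc)
  also have "\<dots> = q2inv ^ c * (q2 ^ b * (K i ^ 2 * (beta i ^ b * betas i ^ c)))"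
    by (simp only: beta_power_K_sq mult.assoc)
  also have "\<dots> = emb ((inverse qf ^ 2) ^ c * (qf ^ 2) ^ b) * (K i ^ 2 * (beta i ^ b * betas i ^ c))"
    by (simp only: emb_mult emb_power mult.assoc)
  finally show ?thesis .
qed

lemma lminus_diag1: "lminus i c b - lminus i c (Suc b) * betas i
    = q2 ^ Suc b * (K i ^ 2 * lminus i c b)"
proof -
  have sc: "ellm_coeff c * (qf ^ 2) ^ Suc c * ((inverse qf ^ 2) ^ c * (qf ^ 2) ^ b)
      = (qf ^ 2) ^ Suc b * ellm_coeff c"
    using inverse_qf_sq_power_qf_sq_power[of c] by (simp add: algebra_simps)
  have "lminus i c b - lminus i c (Suc b) * betas i
      = emb (ellm_coeff c * (qf ^ 2) ^ Suc c) *
        (emb ((inverse qf ^ 2) ^ c * (qf ^ 2) ^ b) * (K i ^ 2 * (beta i ^ b * betas i ^ c)))"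
    by (simp only: lminus_sub_lminus_Suc_betas beta_power_betas_power_K_sq)
  also have "\<dots> = emb ((qf ^ 2) ^ Suc b * ellm_coeff c) * (K i ^ 2 * (beta i ^ b * betas i ^ c))"
    by (simp only: sc[symmetric]) (simp only: emb_mult mult.assoc)
  also have "\<dots> = q2 ^ Suc b * (K i ^ 2 * lminus i c b)"
    by (simp only: lminus_eq emb_mult emb_power mult.assoc emb_left[of "K i ^ 2"])
  finally show ?thesis .
qed

lemma lminus_offdiag_0: "lminus i 0 b * beta i - lminus i 0 (Suc b) = 0"
  by (simp add: lminus_eq ellm_coeff_def power_Suc2 power_commutes)

lemma lminus_offdiag_Suc:
  "lminus i (Suc c) b * beta i - lminus i (Suc c) (Suc b)
    + (lminus i c b - lminus i c (Suc b) * betas i) = 0"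
proof -
  let ?s = "emb (ellm_coeff (Suc c))" and ?N = "beta i ^ b * (betas i ^ c * K i ^ 2)"
  have lminus_beta: "lminus i (Suc c) b * beta i
      = ?s * (beta i ^ b * (betas i ^ c * (1 - K i ^ 2)))"
    by (simp only: lminus_eq mult.assoc betas_power_Suc_beta)
  have lminus_Suc: "lminus i (Suc c) (Suc b)
      = ?s * (beta i ^ b * (betas i ^ c * (1 - q2 ^ Suc c * K i ^ 2)))"
    by (simp only: lminus_eq beta_power_Suc_betas_power_Suc)
  have "beta i ^ b * (betas i ^ c * (1 - K i ^ 2))
      - beta i ^ b * (betas i ^ c * (1 - q2 ^ Suc c * K i ^ 2))
      = beta i ^ b * (betas i ^ c * (q2 ^ Suc c * K i ^ 2)) - ?N"
    by (simp add: algebra_simps)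
  also have "\<dots> = (q2 ^ Suc c - 1) * ?N"
    by (simp only: emb_power_left[of "betas i ^ c"] emb_power_left[of "beta i ^ b"]
        left_diff_distrib mult_1_left)
  finally have "lminus i (Suc c) b * beta i - lminus i (Suc c) (Suc b)
      = emb (ellm_coeff (Suc c) * ((qf ^ 2) ^ Suc c - 1)) * ?N"
    unfolding lminus_beta lminus_Suc
    by (simp only: emb_mult emb_diff emb_1 emb_power mult.assoc flip: right_diff_distrib)
  with lminus_sub_lminus_Suc_betas show ?thesis
    by (simp only: emb_add[symmetric] distrib_right[symmetric] ellm_coeff_Suc_cancel emb_0
        mult_zero_left)
qed


end

end

context qboson_algebra
begin

inductive_set sites_subring :: "nat set \<Rightarrow> 'a set" for S :: "nat set" where
  emb_mem: "emb c \<in> sites_subring S"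
| beta_mem: "i \<in> S \<Longrightarrow> beta i \<in> sites_subring S"
| betas_mem: "i \<in> S \<Longrightarrow> betas i \<in> sites_subring S"
| K_mem: "i \<in> S \<Longrightarrow> K i \<in> sites_subring S"
| add_mem: "x \<in> sites_subring S \<Longrightarrow> y \<in> sites_subring S \<Longrightarrow> x + y \<in> sites_subring S"
| mult_mem: "x \<in> sites_subring S \<Longrightarrow> y \<in> sites_subring S \<Longrightarrow> x * y \<in> sites_subring S"
| uminus_mem: "x \<in> sites_subring S \<Longrightarrow> - x \<in> sites_subring S"

lemma zero_mem: "0 \<in> sites_subring S"
  using emb_mem[of 0 S] by simp

lemma one_mem: "1 \<in> sites_subring S"
  using emb_mem[of 1 S] by simp

lemma power_mem: "x \<in> sites_subring S \<Longrightarrow> x ^ k \<in> sites_subring S"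
  by (induct k) (auto intro: one_mem mult_mem)

lemma sum_mem: "(\<And>x. x \<in> A \<Longrightarrow> f x \<in> sites_subring S) \<Longrightarrow> sum f A \<in> sites_subring S"
  by (induct A rule: infinite_finite_induct) (auto intro: zero_mem add_mem)

lemma sites_subring_mono: "x \<in> sites_subring S \<Longrightarrow> S \<subseteq> T \<Longrightarrow> x \<in> sites_subring T"
  by (induct rule: sites_subring.induct) (auto intro: sites_subring.intros)

lemma sites_subring_commute_generator:
  assumes S: "S \<subseteq> {1..n}" and j: "j \<in> {1..n}" "j \<notin> S"
    and h: "h \<in> {beta j, betas j, K j}" and x: "x \<in> sites_subring S"
  shows "x * h = h * x"
  using x
proof (induct rule: sites_subring.induct)
  case (emb_mem c)
  then show ?case by (rule emb_central)
next
  case (add_mem x y)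
  then show ?case by (simp add: algebra_simps)
next
  case (mult_mem x y)
  then show ?case by (metis mult.assoc)
next
  case (uminus_mem x)
  then show ?case by simp
qed (use S j h distinct_sites_commute in blast)+

lemma sites_subring_commute:
  assumes S: "S \<subseteq> {1..n}" and T: "T \<subseteq> {1..n}" and disjoint: "S \<inter> T = {}"
    and x: "x \<in> sites_subring S" and y: "y \<in> sites_subring T"
  shows "x * y = y * x"
  using y
proof (induct rule: sites_subring.induct)
  case (emb_mem c)
  then show ?case by (rule emb_central[symmetric])
next
  case (add_mem u v)
  then show ?case by (simp add: algebra_simps)
next
  case (mult_mem u v)
  then show ?case by (metis mult.assoc)
next
  case (uminus_mem u)
  then show ?case by simp
qed (use S T disjoint x sites_subring_commute_generator in blast)+

definition fps_over :: "nat set \<Rightarrow> 'a fps \<Rightarrow> bool" where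
  "fps_over S F \<longleftrightarrow> (\<forall>k. F $ k \<in> sites_subring S)"

lemma fps_over_add: "fps_over S F \<Longrightarrow> fps_over S G \<Longrightarrow> fps_over S (F + G)"
  and fps_over_mult: "fps_over S F \<Longrightarrow> fps_over S G \<Longrightarrow> fps_over S (F * G)"
  and fps_over_const: "x \<in> sites_subring S \<Longrightarrow> fps_over S (fps_const x)"
  and fps_over_monom: "x \<in> sites_subring S \<Longrightarrow> fps_over S (fps_monom x d)"
  and fps_over_X: "fps_over S fps_X"
  and fps_over_0: "fps_over S 0"
  and fps_over_1: "fps_over S 1"
  and fps_over_lsum: "(\<And>c. fps_over S (f c)) \<Longrightarrow> fps_over S (fps_lsum f)"
  and fps_over_scale: "fps_over S F \<Longrightarrow> fps_over S (fps_scale (emb c) F)"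
  by (simp_all add: fps_over_def fps_mult_nth fps_monom_nth fps_lsum_nth fps_scale_def zero_mem
      one_mem add_mem mult_mem sum_mem power_mem emb_mem)

lemma fps_over_mono: "fps_over S F \<Longrightarrow> S \<subseteq> T \<Longrightarrow> fps_over T F"
  unfolding fps_over_def using sites_subring_mono by blast

lemma fps_over_commute:
  assumes "S \<subseteq> {1..n}" "T \<subseteq> {1..n}" "S \<inter> T = {}" "fps_over S F" "fps_over T G"
  shows "F * G = G * F"
proof (rule fps_ext)
  fix k
  have "(F * G) $ k = (\<Sum>i=0..k. F $ i * G $ (k - i))" by (simp add: fps_mult_nth)
  also have "\<dots> = (\<Sum>i=0..k. G $ (k - i) * F $ i)"
    using sites_subring_commute[OF assms(1-3)] assms(4,5) unfolding fps_over_def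
    by (intro sum.cong) auto
  also have "\<dots> = (\<Sum>i=0..k. G $ i * F $ (k - i))"
    by (subst sum.atLeastAtMost_rev) (rule sum.cong, auto)
  finally show "(F * G) $ k = (G * F) $ k" by (simp add: fps_mult_nth)
qed

lemma lplus_mem: "lplus i a b \<in> sites_subring {i}"
  and lminus_mem: "lminus i a b \<in> sites_subring {i}"
  by (simp_all add: ellp_def ellm_def mult_mem power_mem emb_mem beta_mem betas_mem)

end

section \<open>The Q-operator as a product along the chain\<close>

fun Qpartial :: "(nat \<Rightarrow> nat \<Rightarrow> nat \<Rightarrow> 'a::ring_1) \<Rightarrow> nat \<Rightarrow> 'a kernel" where
  "Qpartial ell 0 a b = (if a = b then 1 else 0)"
| "Qpartial ell (Suc j) a b = fps_lsum (\<lambda>c. Qpartial ell j a c * fps_monom (ell (Suc j) c b) c)"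

definition chain_tuples :: "nat \<Rightarrow> nat \<Rightarrow> nat \<Rightarrow> nat \<Rightarrow> (nat \<Rightarrow> nat) set" where
  "chain_tuples j a b k = {m. m (Suc 0) = a \<and> m (Suc j) = b \<and>
     (\<forall>i. i \<notin> {1..Suc j} \<longrightarrow> m i = 0) \<and> (\<Sum>i\<in>{1..j}. m i) = k}"

lemma chain_tuples_0:
  "chain_tuples 0 a b k = (if a = b \<and> k = 0 then {\<lambda>i. if i = 1 then a else 0} else {})"
  unfolding chain_tuples_def by (auto simp: fun_eq_iff)

lemma bij_betw_chain_tuples_Suc:
  "bij_betw (\<lambda>(c, m). m(Suc (Suc j) := b)) (SIGMA c:{..k}. chain_tuples j a c (k - c))
     (chain_tuples (Suc j) a b k)"
proof (rule bij_betw_byWitness[where f' = "\<lambda>m. (m (Suc j), m(Suc (Suc j) := 0))"])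
  show "\<forall>x \<in> (SIGMA c:{..k}. chain_tuples j a c (k - c)).
      (\<lambda>m. (m (Suc j), m(Suc (Suc j) := 0))) ((\<lambda>(c, m). m(Suc (Suc j) := b)) x) = x"
    by (auto simp: chain_tuples_def fun_eq_iff)
  show "\<forall>m \<in> chain_tuples (Suc j) a b k.
      (\<lambda>(c, m). m(Suc (Suc j) := b)) ((\<lambda>m. (m (Suc j), m(Suc (Suc j) := 0))) m) = m"
    by (auto simp: chain_tuples_def fun_eq_iff)
  have "m(Suc (Suc j) := b) \<in> chain_tuples (Suc j) a b k"
    if "c \<le> k" "m \<in> chain_tuples j a c (k - c)" for c m
  proof -
    have "(\<Sum>i\<in>{1..Suc j}. (m(Suc (Suc j) := b)) i) = (\<Sum>i\<in>{1..j}. m i) + m (Suc j)"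
      by (simp add: sum.atLeast1_atMost_eq)
    then show ?thesis using that unfolding chain_tuples_def by auto
  qed
  then show "(\<lambda>(c, m). m(Suc (Suc j) := b)) ` (SIGMA c:{..k}. chain_tuples j a c (k - c))
      \<subseteq> chain_tuples (Suc j) a b k"
    by auto
  have "(m (Suc j), m(Suc (Suc j) := 0)) \<in> (SIGMA c:{..k}. chain_tuples j a c (k - c))"
    if "m \<in> chain_tuples (Suc j) a b k" for m
  proof -
    have "(\<Sum>i\<in>{1..j}. (m(Suc (Suc j) := 0)) i) = (\<Sum>i\<in>{1..j}. m i)"
      by (rule sum.cong) auto
    then show ?thesis using that unfolding chain_tuples_def by auto
  qed
  then show "(\<lambda>m. (m (Suc j), m(Suc (Suc j) := 0))) ` chain_tuples (Suc j) a b k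
      \<subseteq> (SIGMA c:{..k}. chain_tuples j a c (k - c))"
    by auto
qed

lemma finite_chain_tuples: "finite (chain_tuples j a b k)"
proof (induct j arbitrary: b k)
  case (Suc j)
  then show ?case
    using bij_betw_finite[OF bij_betw_chain_tuples_Suc] by (auto intro!: finite_SigmaI)
qed (simp add: chain_tuples_0)

lemma Qpartial_nth:
  "Qpartial ell j a b $ k
     = (\<Sum>m\<in>chain_tuples j a b k. prod_list (map (\<lambda>i. ell i (m i) (m (Suc i))) [1..<Suc j]))"
proof (induct j arbitrary: b k)
  case 0
  show ?case by (simp add: chain_tuples_0)
next
  case (Suc j)
  let ?f = "\<lambda>j m. prod_list (map (\<lambda>i. ell i (m i) (m (Suc i))) [1..<Suc j])"
  have "Qpartial ell (Suc j) a b $ k = (\<Sum>c\<le>k. Qpartial ell j a c $ (k - c) * ell (Suc j) c b)"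
    by (simp add: fps_lsum_nth fps_mult_monom_nth)
  also have "\<dots>
      = (\<Sum>x\<in>(SIGMA c:{..k}. chain_tuples j a c (k - c)). ?f j (snd x) * ell (Suc j) (fst x) b)"
    by (simp add: Suc sum_distrib_right sum.Sigma finite_chain_tuples split_beta)
  also have "\<dots> = (\<Sum>x\<in>(SIGMA c:{..k}. chain_tuples j a c (k - c)).
      ?f (Suc j) ((\<lambda>(c, m). m(Suc (Suc j) := b)) x))"
  proof (rule sum.cong[OF refl])
    fix x assume "x \<in> (SIGMA c:{..k}. chain_tuples j a c (k - c))"
    then obtain c m where x: "x = (c, m)" and "m \<in> chain_tuples j a c (k - c)" by auto
    then have "m (Suc j) = c" by (simp add: chain_tuples_def)
    moreover have "?f j (m(Suc (Suc j) := b)) = ?f j m"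
      by (rule arg_cong[where f = prod_list], rule map_cong) auto
    ultimately show "?f j (snd x) * ell (Suc j) (fst x) b
        = ?f (Suc j) ((\<lambda>(c, m). m(Suc (Suc j) := b)) x)"
      by (simp add: x)
  qed
  also have "\<dots> = (\<Sum>m\<in>chain_tuples (Suc j) a b k. ?f (Suc j) m)"
    by (rule sum.reindex_bij_betw[OF bij_betw_chain_tuples_Suc])
  finally show ?case .
qed

lemma bij_betw_chain_tuples_cycle:
  assumes n: "n \<ge> 1"
  shows "bij_betw (\<lambda>(a, m). m(Suc n := 0)) (SIGMA a:{..k}. chain_tuples n a a k) (tuples n k)"
proof (rule bij_betw_byWitness[where f' = "\<lambda>m. (m 1, m(Suc n := m 1))"])
  show "\<forall>x \<in> (SIGMA a:{..k}. chain_tuples n a a k).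
      (\<lambda>m. (m 1, m(Suc n := m 1))) ((\<lambda>(a, m). m(Suc n := 0)) x) = x"
    using n by (auto simp: chain_tuples_def fun_eq_iff)
  show "\<forall>m \<in> tuples n k. (\<lambda>(a, m). m(Suc n := 0)) ((\<lambda>m. (m 1, m(Suc n := m 1))) m) = m"
    by (auto simp: tuples_def fun_eq_iff)
  have "m(Suc n := 0) \<in> tuples n k" if "m \<in> chain_tuples n a a k" for a m
  proof -
    have "(\<Sum>i\<in>{1..n}. (m(Suc n := 0)) i) = (\<Sum>i\<in>{1..n}. m i)" by (rule sum.cong) auto
    then show ?thesis using that unfolding chain_tuples_def tuples_def by auto
  qed
  then show "(\<lambda>(a, m). m(Suc n := 0)) ` (SIGMA a:{..k}. chain_tuples n a a k) \<subseteq> tuples n k"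
    by auto
  have "(m 1, m(Suc n := m 1)) \<in> (SIGMA a:{..k}. chain_tuples n a a k)" if "m \<in> tuples n k" for m
  proof -
    have "m 1 \<le> k"
      using that n member_le_sum[of 1 "{1..n}" m] unfolding tuples_def by auto
    moreover have "(\<Sum>i\<in>{1..n}. (m(Suc n := m 1)) i) = (\<Sum>i\<in>{1..n}. m i)" by (rule sum.cong) auto
    ultimately show ?thesis using that n unfolding chain_tuples_def tuples_def by auto
  qed
  then show "(\<lambda>m. (m 1, m(Suc n := m 1))) ` tuples n k \<subseteq> (SIGMA a:{..k}. chain_tuples n a a k)"
    by auto
qed

lemma Qop_eq_lsum_Qpartial:
  assumes n: "n \<ge> 1"
  shows "Qop n ell z = fps_lsum (\<lambda>a. fps_const (z ^ a) * Qpartial ell n a a)"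
proof (rule fps_ext)
  fix k
  let ?f = "\<lambda>m. prod_list (map (\<lambda>i. ell i (m i) (m (Suc i))) [1..<Suc n])"
  let ?g = "\<lambda>m. z ^ m 1 * prod_list (map (\<lambda>i. ell i (m i) (m (cnext n i))) [1..<n+1])"
  have "fps_lsum (\<lambda>a. fps_const (z ^ a) * Qpartial ell n a a) $ k
      = (\<Sum>a\<le>k. \<Sum>m\<in>chain_tuples n a a k. z ^ a * ?f m)"
    by (simp add: fps_lsum_nth Qpartial_nth sum_distrib_left)
  also have "\<dots> = (\<Sum>x\<in>(SIGMA a:{..k}. chain_tuples n a a k). z ^ fst x * ?f (snd x))"
    by (simp add: sum.Sigma finite_chain_tuples split_beta)
  also have "\<dots> = (\<Sum>x\<in>(SIGMA a:{..k}. chain_tuples n a a k). ?g ((\<lambda>(a, m). m(Suc n := 0)) x))"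
  proof (rule sum.cong[OF refl])
    fix x assume "x \<in> (SIGMA a:{..k}. chain_tuples n a a k)"
    then obtain a m where x: "x = (a, m)" and m: "m 1 = a" "m (Suc n) = a"
      using n unfolding chain_tuples_def by auto
    have closing: "map (\<lambda>i. ell i ((m(Suc n := 0)) i) ((m(Suc n := 0)) (cnext n i))) [1..<n+1]
        = map (\<lambda>i. ell i (m i) (m (Suc i))) [1..<n+1]"
      using m by (intro map_cong) (auto simp: cnext_def)
    have "?g (m(Suc n := 0)) = z ^ a * ?f m"
      unfolding closing using n m by simp
    then show "z ^ fst x * ?f (snd x) = ?g ((\<lambda>(a, m). m(Suc n := 0)) x)"
      by (simp add: x)
  qed
  also have "\<dots> = (\<Sum>m\<in>tuples n k. ?g m)"
    by (rule sum.reindex_bij_betw[OF bij_betw_chain_tuples_cycle[OF n]])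
  finally show "Qop n ell z $ k = fps_lsum (\<lambda>a. fps_const (z ^ a) * Qpartial ell n a a) $ k"
    by (simp add: Qop_def)
qed

lemma vanishes_below_Qpartial: "vanishes_below a (Qpartial ell (Suc j) a b)"
proof (induct j arbitrary: b)
  case 0
  have "vanishes_below a (Qpartial ell 0 a c * fps_monom (ell (Suc 0) c b) c)" for c
    by (cases "a = c") (auto intro: vanishes_below_monom)
  then show ?case by (simp add: vanishes_below_lsum)
next
  case (Suc j)
  then show ?case by (simp add: vanishes_below_lsum vanishes_below_mult_right)
qed

context qboson_algebra
begin

definition L_entry :: "nat \<Rightarrow> nat \<Rightarrow> nat \<Rightarrow> 'a fps" where
  "L_entry i r s = (if r = 0 then (if s = 0 then 1 else fps_X * fps_const (betas i))
                   else (if s = 0 then fps_const (beta i) else fps_X))"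

fun M_entry :: "nat \<Rightarrow> nat \<Rightarrow> nat \<Rightarrow> 'a fps" where
  "M_entry 0 r s = (if r = s then 1 else 0)"
| "M_entry (Suc j) r s = L_entry (Suc j) r 0 * M_entry j 0 s + L_entry (Suc j) r 1 * M_entry j 1 s"

lemma monodromy_eq_M_entry:
  "monodromy beta betas j = (M_entry j 0 0, M_entry j 0 1, M_entry j 1 0, M_entry j 1 1)"
  by (induct j) (simp_all add: mat2_mult_def Lop_def L_entry_def)

lemma transfer_eq_M_entry: "transfer n beta betas z = M_entry n 0 0 + fps_const z * M_entry n 1 1"
  by (simp add: transfer_def monodromy_eq_M_entry)

lemma fps_over_L_entry: "fps_over {i} (L_entry i r s)"
  by (simp add: L_entry_def fps_over_1 fps_over_X fps_over_mult fps_over_const beta_mem betas_mem)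

lemma fps_over_M_entry: "fps_over {1..j} (M_entry j r s)"
proof (induct j arbitrary: r s)
  case 0
  then show ?case by (simp add: fps_over_1 fps_over_0)
next
  case (Suc j)
  have "fps_over {1..Suc j} (L_entry (Suc j) r t)" for t
    by (rule fps_over_mono[OF fps_over_L_entry]) auto
  moreover have "fps_over {1..Suc j} (M_entry j t s)" for t
    by (rule fps_over_mono[OF Suc]) auto
  ultimately show ?case by (simp only: M_entry.simps) (intro fps_over_add fps_over_mult)
qed

lemma vanishes_below_M_entry: "vanishes_below 1 (M_entry (Suc j) r 1)"
proof (induct j arbitrary: r)
  case 0
  then show ?case by (auto simp: L_entry_def vanishes_below_def)
next
  case (Suc j)
  then show ?case
    by (simp only: M_entry.simps(2)[of "Suc j"])
      (intro vanishes_below_add vanishes_below_mult_left)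
qed

lemma fps_over_Qpartial:
  assumes "\<And>i a b. ell i a b \<in> sites_subring {i}"
  shows "fps_over {1..j} (Qpartial ell j a b)"
proof (induct j arbitrary: b)
  case 0
  then show ?case by (simp add: fps_over_1 fps_over_0)
next
  case (Suc j)
  have "fps_over {1..Suc j} (Qpartial ell j a c)" for c
    by (rule fps_over_mono[OF Suc]) auto
  moreover have "fps_over {1..Suc j} (fps_monom (ell (Suc j) c b) c)" for c
    by (rule fps_over_mono[OF fps_over_monom[OF assms]]) auto
  ultimately show ?case by (simp only: Qpartial.simps) (intro fps_over_lsum fps_over_mult)
qed

lemma next_site_commute:
  assumes "Suc j \<le> n" "fps_over {Suc j} F" "fps_over {1..j} G"
  shows "F * G = G * F"
  by (rule fps_over_commute[OF _ _ _ assms(2,3)]) (use assms(1) in auto)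

definition K_sq_prod :: "nat \<Rightarrow> 'a" where
  "K_sq_prod j = prod_list (map (\<lambda>i. K i ^ 2) [1..<j+1])"

lemma K_sq_prod_Suc: "K_sq_prod (Suc j) = K_sq_prod j * K (Suc j) ^ 2"
  by (simp add: K_sq_prod_def)

lemma fps_over_K_sq: "fps_over {i} (fps_const (K i ^ 2))"
  by (intro fps_over_const power_mem K_mem) simp

end

section \<open>The identity for \<open>Q\<^sup>+\<close>\<close>

context qboson_algebra
begin

text \<open>Blocks carry the auxiliary indices transposed: entry \<open>(r, s)\<close> involves the \<open>(s, r)\<close>
  entry of the L-operator, so that block products reproduce the chain \<open>L\<^sub>j\<^sub>+\<^sub>1(u) \<cdots> L\<^sub>1(u)\<close>.\<close>
definition Gplus :: "nat \<Rightarrow> 'a block" where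
  "Gplus i r s c b = L_entry i s r * fps_monom (lplus i c b) c"

lemma Gplus_entries:
  "Gplus i 0 0 c b = fps_monom (lplus i c b) c"
  "Gplus i 0 1 c b = fps_monom (beta i * lplus i c b) c"
  "Gplus i 1 0 c b = fps_monom (betas i * lplus i c b) (Suc c)"
  "Gplus i 1 1 c b = fps_monom (lplus i c b) (Suc c)"
  by (simp_all add: Gplus_def L_entry_def fps_const_mult_monom fps_X_mult_monom mult.assoc)

\<comment> \<open>the simplifier rewrites the index \<open>1\<close> to \<open>Suc 0\<close>\<close>
lemmas Gplus_simps = Gplus_entries Gplus_entries(2-4)[unfolded One_nat_def]

definition Aplus :: "nat \<Rightarrow> 'a kernel" where
  "Aplus i c b = fps_scale q2 (fps_monom (lplus i c b) c)"

definition Bplus :: "nat \<Rightarrow> 'a kernel" where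
  "Bplus i c b = fps_monom (K i ^ 2 * (q2inv ^ c * lplus i c b)) (Suc c)"

lemma gauge_triangular_Gplus:
  assumes i: "i \<in> {1..n}"
  shows "gauge_triangular (Gplus i) (Aplus i) (Bplus i)"
  unfolding gauge_triangular_def Aplus_def Bplus_def
proof (intro conjI allI)
  fix c b
  show "Gplus i 0 0 c b + lag (\<lambda>c. Gplus i 1 0 c b) c = fps_scale q2 (fps_monom (lplus i c b) c)"
    by (cases c) (simp_all add: Gplus_simps lag_def fps_scale_monom fps_monom_add lplus_diag0[OF i]
        flip: power_Suc)
  show "Gplus i 1 1 c b - Gplus i 1 0 c (Suc b)
      = fps_monom (K i ^ 2 * (q2inv ^ c * lplus i c b)) (Suc c)"
    by (simp add: Gplus_simps fps_monom_diff lplus_diag1[OF i])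
  show "Gplus i 0 1 c b - Gplus i 0 0 c (Suc b) + lag (\<lambda>c. Gplus i 1 1 c b) c
      - lag (\<lambda>c. Gplus i 1 0 c (Suc b)) c = 0"
  proof (cases c)
    case 0
    then show ?thesis
      by (simp add: Gplus_simps lag_def fps_monom_diff lplus_offdiag_0[OF i] fps_monom_0)
  next
    case (Suc c')
    have "Gplus i 0 1 c b - Gplus i 0 0 c (Suc b) + lag (\<lambda>c. Gplus i 1 1 c b) c
        - lag (\<lambda>c. Gplus i 1 0 c (Suc b)) c
      = fps_monom (beta i * lplus i c b - lplus i c (Suc b)
          + (lplus i c' b - betas i * lplus i c' (Suc b))) c"
      by (simp add: Suc Gplus_simps lag_def fps_monom_add fps_monom_diff algebra_simps)
    then show ?thesis by (simp add: Suc lplus_offdiag_Suc[OF i] fps_monom_0)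
  qed
qed

definition Wplus :: "nat \<Rightarrow> 'a block" where
  "Wplus j r s a c = M_entry j s r * Qpartial lplus j a c"

definition Pplus :: "nat \<Rightarrow> 'a kernel" where
  "Pplus j a c = fps_scale q2 (Qpartial lplus j a c)"

definition Rplus :: "nat \<Rightarrow> 'a kernel" where
  "Rplus j a c = fps_const (K_sq_prod j) * fps_X ^ j * fps_scale q2inv (Qpartial lplus j a c)"

lemma Wplus_Suc:
  assumes j: "Suc j \<le> n"
  shows "Wplus (Suc j) = block_mult (Wplus j) (Gplus (Suc j))"
proof (intro ext)
  fix r s a b
  let ?L = "L_entry (Suc j) s" and ?Q = "\<lambda>c. Qpartial lplus j a c"
    and ?E = "\<lambda>c. fps_monom (lplus (Suc j) c b) c"
  have commute: "?L t * (M_entry j t r * (?Q c * ?E c))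
      = (M_entry j t r * ?Q c) * (?L t * ?E c)" for t c
  proof -
    have "?L t * M_entry j t r = M_entry j t r * ?L t" "?L t * ?Q c = ?Q c * ?L t"
      by (intro next_site_commute[OF j] fps_over_L_entry fps_over_M_entry
          fps_over_Qpartial lplus_mem)+
    then show ?thesis by (rule mult_regroup_commuting_left)
  qed
  have "Wplus (Suc j) r s a b
      = (?L 0 * M_entry j 0 r + ?L 1 * M_entry j 1 r) * fps_lsum (\<lambda>c. ?Q c * ?E c)"
    by (simp only: Wplus_def M_entry.simps Qpartial.simps)
  also have "\<dots> = fps_lsum (\<lambda>c. (?L 0 * M_entry j 0 r + ?L 1 * M_entry j 1 r) * (?Q c * ?E c))"
    by (intro fps_lsum_mult_left vanishes_below_mult_left vanishes_below_monom order_refl)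
  also have "\<dots> = block_mult (Wplus j) (Gplus (Suc j)) r s a b"
    by (simp add: block_mult_def Wplus_def Gplus_def distrib_right mult.assoc commute)
  finally show "Wplus (Suc j) r s a b = block_mult (Wplus j) (Gplus (Suc j)) r s a b" .
qed

lemma Pplus_Suc: "Pplus (Suc j) = kernel_mult (Pplus j) (Aplus (Suc j))"
  by (intro ext)
    (simp add: Pplus_def Aplus_def kernel_mult_def fps_scale_lsum fps_scale_mult emb_central)

lemma Rplus_Suc:
  assumes j: "Suc j \<le> n"
  shows "Rplus (Suc j) = kernel_mult (Rplus j) (Bplus (Suc j))"
proof (intro ext)
  fix a b
  let ?K = "fps_const (K (Suc j) ^ 2)" and ?Q = "\<lambda>c. fps_scale q2inv (Qpartial lplus j a c)"
    and ?E = "\<lambda>c. fps_scale q2inv (fps_monom (lplus (Suc j) c b) c)"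
    and ?C = "fps_const (K_sq_prod (Suc j)) * fps_X ^ Suc j"
  have "Rplus j a c * Bplus (Suc j) c b = ?C * (?Q c * ?E c)" for c
  proof -
    have K_Q: "?Q c * ?K = ?K * ?Q c"
      by (intro next_site_commute[OF j, symmetric] fps_over_K_sq fps_over_scale fps_over_Qpartial
          lplus_mem)
    have "Rplus j a c * Bplus (Suc j) c b
        = fps_const (K_sq_prod j) * fps_X ^ j * (?Q c * ?K) * (fps_X * ?E c)"
      by (simp add: Rplus_def Bplus_def fps_scale_monom fps_const_mult_monom fps_X_mult_monom
          mult.assoc)
    also have "\<dots> = fps_const (K_sq_prod j) * (fps_X ^ j * ?K) * ((?Q c * fps_X) * ?E c)"
      by (simp only: K_Q mult.assoc)
    also have "\<dots> = fps_const (K_sq_prod j) * (?K * fps_X ^ j) * ((fps_X * ?Q c) * ?E c)"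
      by (simp only: fps_mult_fps_X_power_commute[of j ?K] fps_mult_fps_X_commute[of "?Q c"])
    also have "\<dots> = ?C * (?Q c * ?E c)"
      by (simp only: K_sq_prod_Suc fps_const_mult[symmetric] power_Suc2 mult.assoc)
    finally show ?thesis .
  qed
  moreover have "Rplus (Suc j) a b = fps_lsum (\<lambda>c. ?C * (?Q c * ?E c))"
    by (simp add: Rplus_def fps_scale_lsum fps_scale_mult emb_central)
      (rule fps_lsum_mult_left,
        simp add: fps_scale_monom vanishes_below_mult_left vanishes_below_monom)
  ultimately show "Rplus (Suc j) a b = kernel_mult (Rplus j) (Bplus (Suc j)) a b"
    by (simp add: kernel_mult_def)
qed

lemma gauge_triangular_Wplus: "gauge_triangular (Wplus n) (Pplus n) (Rplus n)"
proof (rule gauge_triangular_chain[where W = Wplus and P = Pplus and R = Rplus and G = Gplus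
      and A = Aplus and B = Bplus])
  show "gauge_triangular (Wplus 0) (Pplus 0) (Rplus 0)"
    by (simp add: gauge_triangular_def Wplus_def Pplus_def Rplus_def lag_def K_sq_prod_def
        fps_scale_1 fps_scale_0)
qed (simp_all add: Wplus_Suc Pplus_Suc Rplus_Suc gauge_triangular_Gplus Gplus_simps
    vanishes_below_monom)

lemma vanishes_below_scale: "vanishes_below c F \<Longrightarrow> vanishes_below c (fps_scale w F)"
  by (simp add: vanishes_below_def fps_scale_def)

lemma transfer_mult_Qplus:
  assumes n: "n \<ge> 1"
  shows "transfer n beta betas z * Qplus n emb beta betas z
    = fps_scale q2 (Qplus n emb beta betas z)
      + Delta n K z * fps_scale q2inv (Qplus n emb beta betas z)"
proof -
  obtain n' where n': "n = Suc n'" using n by (cases n) auto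
  have vanish: "vanishes_below a (Qpartial lplus n a b)" for a b
    unfolding n' by (rule vanishes_below_Qpartial)
  have Qplus_eq: "Qplus n emb beta betas z
      = fps_lsum (\<lambda>a. fps_const (z ^ a) * Qpartial lplus n a a)"
    unfolding Qplus_def by (rule Qop_eq_lsum_Qpartial[OF n])
  have vanish10: "vanishes_below (Suc a) (Wplus n 1 0 a (Suc a))" for a
    using vanishes_below_mult[OF vanishes_below_M_entry vanish] by (simp add: Wplus_def n')
  have twist: "fps_const (z ^ Suc a) = fps_const z * fps_const (z ^ a)" for a
    by simp
  have "transfer n beta betas z * Qplus n emb beta betas z
      = fps_lsum (\<lambda>a. transfer n beta betas z * (fps_const (z ^ a) * Qpartial lplus n a a))"
    unfolding Qplus_eq by (intro fps_lsum_mult_left vanishes_below_mult_left vanish)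
  also have "\<dots>
      = fps_lsum (\<lambda>a. fps_const (z ^ a) * Wplus n 0 0 a a
          + fps_const (z ^ Suc a) * Wplus n 1 1 a a)"
    unfolding transfer_eq_M_entry Wplus_def twist
    by (simp only: distrib_right mult.assoc fps_const_z_power_commute)
  also have "\<dots> = fps_lsum (\<lambda>a. fps_const (z ^ a) * Pplus n a a)
      + fps_lsum (\<lambda>a. fps_const (z ^ Suc a) * Rplus n a a)"
    by (rule gauge_triangular_twisted_trace[OF gauge_triangular_Wplus vanish10])
  also have "fps_lsum (\<lambda>a. fps_const (z ^ a) * Pplus n a a)
      = fps_scale q2 (Qplus n emb beta betas z)"
    by (simp add: Qplus_eq Pplus_def fps_scale_lsum fps_scale_const_mult emb_central)
  also have "fps_lsum (\<lambda>a. fps_const (z ^ Suc a) * Rplus n a a)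
      = Delta n K z * fps_scale q2inv (Qplus n emb beta betas z)"
  proof -
    have "fps_const (z ^ Suc a) * Rplus n a a
        = Delta n K z * (fps_const (z ^ a) * fps_scale q2inv (Qpartial lplus n a a))" for a
      by (simp only: Rplus_def Delta_def K_sq_prod_def[symmetric] twist fps_const_mult[symmetric]
          mult.assoc fps_const_z_power_commute)
    then show ?thesis
      by (simp add: Qplus_eq fps_scale_lsum fps_scale_const_mult emb_central)
        (intro fps_lsum_mult_left[symmetric] vanishes_below_mult_left vanishes_below_scale vanish)
  qed
  finally show ?thesis .
qed

end

section \<open>The identity for \<open>Q\<^sup>-\<close>\<close>

text \<open>\<open>rho j a c = q\<^bsup>2(j + c - a)\<^esup>\<close>, written without negative exponents.\<close>
definition rho :: "nat \<Rightarrow> nat \<Rightarrow> nat \<Rightarrow> cq" where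
  "rho j a c = (qf ^ 2) ^ j * (qf ^ 2) ^ c * (inverse qf ^ 2) ^ a"

lemma rho_Suc: "rho j a c * ((qf ^ 2) ^ Suc b * (inverse qf ^ 2) ^ c) = rho (Suc j) a b"
  using qf_sq_power_inverse_qf_sq_power[of c] unfolding rho_def by (simp add: algebra_simps)

lemma rho_diag: "rho j a a = (qf ^ 2) ^ j"
  using qf_sq_power_inverse_qf_sq_power[of a] unfolding rho_def by (simp add: mult.assoc)

context qboson_algebra
begin

definition Gminus :: "nat \<Rightarrow> 'a block" where
  "Gminus i r s c b = fps_monom (lminus i c b) c * L_entry i s r"

lemma Gminus_entries:
  "Gminus i 0 0 c b = fps_monom (lminus i c b) c"
  "Gminus i 0 1 c b = fps_monom (lminus i c b * beta i) c"
  "Gminus i 1 0 c b = fps_monom (lminus i c b * betas i) (Suc c)"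
  "Gminus i 1 1 c b = fps_monom (lminus i c b) (Suc c)"
  by (simp_all add: Gminus_def L_entry_def fps_monom_mult_const fps_monom_mult_X
      flip: mult.assoc)

lemmas Gminus_simps = Gminus_entries Gminus_entries(2-4)[unfolded One_nat_def]

definition Aminus :: "nat \<Rightarrow> 'a kernel" where
  "Aminus i c b = fps_scale q2inv (fps_monom (lminus i c b) c)"

definition Bminus :: "nat \<Rightarrow> 'a kernel" where
  "Bminus i c b = fps_monom (q2 ^ Suc b * (K i ^ 2 * lminus i c b)) (Suc c)"

lemma gauge_triangular_Gminus:
  assumes i: "i \<in> {1..n}"
  shows "gauge_triangular (Gminus i) (Aminus i) (Bminus i)"
  unfolding gauge_triangular_def Aminus_def Bminus_def
proof (intro conjI allI)
  fix c b
  show "Gminus i 0 0 c b + lag (\<lambda>c. Gminus i 1 0 c b) c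
      = fps_scale q2inv (fps_monom (lminus i c b) c)"
    by (cases c)
      (simp_all add: Gminus_simps lag_def fps_scale_monom fps_monom_add lminus_diag0[OF i]
        flip: power_Suc)
  show "Gminus i 1 1 c b - Gminus i 1 0 c (Suc b)
      = fps_monom (q2 ^ Suc b * (K i ^ 2 * lminus i c b)) (Suc c)"
    by (simp add: Gminus_simps fps_monom_diff lminus_diag1[OF i])
  show "Gminus i 0 1 c b - Gminus i 0 0 c (Suc b) + lag (\<lambda>c. Gminus i 1 1 c b) c
      - lag (\<lambda>c. Gminus i 1 0 c (Suc b)) c = 0"
  proof (cases c)
    case 0
    then show ?thesis
      by (simp add: Gminus_simps lag_def fps_monom_diff lminus_offdiag_0[OF i] fps_monom_0)
  next
    case (Suc c')
    have "Gminus i 0 1 c b - Gminus i 0 0 c (Suc b) + lag (\<lambda>c. Gminus i 1 1 c b) c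
        - lag (\<lambda>c. Gminus i 1 0 c (Suc b)) c
      = fps_monom (lminus i c b * beta i - lminus i c (Suc b)
          + (lminus i c' b - lminus i c' (Suc b) * betas i)) c"
      by (simp add: Suc Gminus_simps lag_def fps_monom_add fps_monom_diff algebra_simps)
    then show ?thesis by (simp add: Suc lminus_offdiag_Suc[OF i] fps_monom_0)
  qed
qed

definition Wminus :: "nat \<Rightarrow> 'a block" where
  "Wminus j r s a c = Qpartial lminus j a c * M_entry j s r"

definition Pminus :: "nat \<Rightarrow> 'a kernel" where
  "Pminus j a c = fps_scale q2inv (Qpartial lminus j a c)"

definition Rminus :: "nat \<Rightarrow> 'a kernel" where
  "Rminus j a c
    = fps_const (K_sq_prod j * emb (rho j a c)) * fps_X ^ j * fps_scale q2 (Qpartial lminus j a c)"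

lemma Pminus_Suc: "Pminus (Suc j) = kernel_mult (Pminus j) (Aminus (Suc j))"
  by (intro ext)
    (simp add: Pminus_def Aminus_def kernel_mult_def fps_scale_lsum fps_scale_mult emb_central)

lemma Wminus_Suc:
  assumes j: "Suc j \<le> n"
  shows "Wminus (Suc j) = block_mult (Wminus j) (Gminus (Suc j))"
proof (intro ext)
  fix r s a b
  let ?L = "L_entry (Suc j) s" and ?Q = "\<lambda>c. Qpartial lminus j a c"
    and ?E = "\<lambda>c. fps_monom (lminus (Suc j) c b) c"
  have commute: "(?Q c * ?E c) * (?L t * M_entry j t r)
      = (?Q c * M_entry j t r) * (?E c * ?L t)" for t c
    by (intro mult_regroup_commuting_right next_site_commute[OF j] fps_over_mult fps_over_monom
      lminus_mem
        fps_over_L_entry fps_over_M_entry)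
  have "Wminus (Suc j) r s a b
      = fps_lsum (\<lambda>c. ?Q c * ?E c) * (?L 0 * M_entry j 0 r + ?L 1 * M_entry j 1 r)"
    by (simp only: Wminus_def M_entry.simps Qpartial.simps)
  also have "\<dots> = fps_lsum (\<lambda>c. (?Q c * ?E c) * (?L 0 * M_entry j 0 r + ?L 1 * M_entry j 1 r))"
    by (intro fps_lsum_mult_right vanishes_below_mult_left vanishes_below_monom order_refl)
  also have "\<dots> = block_mult (Wminus j) (Gminus (Suc j)) r s a b"
    by (simp only: block_mult_def Wminus_def Gminus_def distrib_left commute)
  finally show "Wminus (Suc j) r s a b = block_mult (Wminus j) (Gminus (Suc j)) r s a b" .
qed

lemma Rminus_Suc:
  assumes j: "Suc j \<le> n"
  shows "Rminus (Suc j) = kernel_mult (Rminus j) (Bminus (Suc j))"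
proof (intro ext)
  fix a b
  let ?K = "fps_const (K (Suc j) ^ 2)" and ?Q = "\<lambda>c. fps_scale q2 (Qpartial lminus j a c)"
    and ?E = "\<lambda>c. fps_scale q2 (fps_monom (lminus (Suc j) c b) c)"
    and ?C = "fps_const (K_sq_prod (Suc j) * emb (rho (Suc j) a b)) * fps_X ^ Suc j"
  have "Rminus j a c * Bminus (Suc j) c b = ?C * (?Q c * ?E c)" for c
  proof -
    define s where "s = (qf ^ 2) ^ Suc b * (inverse qf ^ 2) ^ c"
    let ?S = "fps_const (emb s)"
    have K_Q: "?Q c * ?K = ?K * ?Q c"
      by (intro next_site_commute[OF j, symmetric] fps_over_K_sq fps_over_scale fps_over_Qpartial
          lminus_mem)
    have S_Q: "?Q c * ?S = ?S * ?Q c"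
      by (rule fps_const_emb_commute[symmetric])
    have "emb s * q2 ^ c = q2 ^ Suc b"
      using inverse_qf_sq_power_qf_sq_power[of c]
        by (simp add: s_def mult.assoc flip: emb_power emb_mult)
    then have "K (Suc j) ^ 2 * (emb s * (q2 ^ c * lminus (Suc j) c b))
        = q2 ^ Suc b * (K (Suc j) ^ 2 * lminus (Suc j) c b)"
      by (simp only: mult.assoc[symmetric])
        (simp only: mult.assoc emb_power_left[of "K (Suc j) ^ 2"])
    then have B: "Bminus (Suc j) c b = ?K * (?S * (fps_X * ?E c))"
      by (simp add: Bminus_def fps_scale_monom fps_const_mult_monom fps_X_mult_monom)
    have "Rminus j a c * Bminus (Suc j) c b
      = fps_const (K_sq_prod j * emb (rho j a c)) * fps_X ^ j * (?Q c * ?K) * (?S * (fps_X * ?E c))"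
      by (simp only: Rminus_def B mult.assoc)
    also have "\<dots> = fps_const (K_sq_prod j * emb (rho j a c)) * (fps_X ^ j * ?K)
        * ((?Q c * ?S) * (fps_X * ?E c))"
      by (simp only: K_Q mult.assoc)
    also have "\<dots> = fps_const (K_sq_prod j * emb (rho j a c)) * (?K * fps_X ^ j)
        * ((?S * ?Q c) * (fps_X * ?E c))"
      by (simp only: fps_mult_fps_X_power_commute[of j ?K] S_Q)
    also have "\<dots> = fps_const (K_sq_prod j * emb (rho j a c)) * ?K * (fps_X ^ j * ?S)
        * ((?Q c * fps_X) * ?E c)"
      by (simp only: mult.assoc)
    also have "\<dots> = fps_const (K_sq_prod j * emb (rho j a c)) * ?K * (?S * fps_X ^ j)
        * ((fps_X * ?Q c) * ?E c)"
      by (simp only: fps_mult_fps_X_power_commute[of j ?S] fps_mult_fps_X_commute[of "?Q c"])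
    also have "\<dots> = fps_const (K_sq_prod j * emb (rho j a c) * K (Suc j) ^ 2 * emb s)
        * (fps_X ^ j * fps_X) * (?Q c * ?E c)"
      by (simp only: fps_const_mult[symmetric] mult.assoc)
    also have "K_sq_prod j * emb (rho j a c) * K (Suc j) ^ 2 * emb s
        = K_sq_prod (Suc j) * emb (rho (Suc j) a b)"
    proof -
      have "K_sq_prod j * emb (rho j a c) * K (Suc j) ^ 2 * emb s
          = K_sq_prod j * (K (Suc j) ^ 2 * (emb (rho j a c) * emb s))"
        by (simp only: mult.assoc emb_left[of "K (Suc j) ^ 2"])
      also have "\<dots> = K_sq_prod (Suc j) * emb (rho (Suc j) a b)"
        by (simp only: emb_mult[symmetric] s_def rho_Suc K_sq_prod_Suc mult.assoc)
      finally show ?thesis .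
    qed
    finally show ?thesis by (simp only: power_Suc2 mult.assoc)
  qed
  moreover have "Rminus (Suc j) a b = fps_lsum (\<lambda>c. ?C * (?Q c * ?E c))"
    by (simp add: Rminus_def fps_scale_lsum fps_scale_mult emb_central)
      (rule fps_lsum_mult_left,
        simp add: fps_scale_monom vanishes_below_mult_left vanishes_below_monom)
  ultimately show "Rminus (Suc j) a b = kernel_mult (Rminus j) (Bminus (Suc j)) a b"
    by (simp add: kernel_mult_def)
qed

lemma gauge_triangular_Wminus: "gauge_triangular (Wminus n) (Pminus n) (Rminus n)"
proof (rule gauge_triangular_chain[where W = Wminus and P = Pminus and R = Rminus and G = Gminus
      and A = Aminus and B = Bminus])
  show "gauge_triangular (Wminus 0) (Pminus 0) (Rminus 0)"
    by (simp add: gauge_triangular_def Wminus_def Pminus_def Rminus_def lag_def K_sq_prod_def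
        rho_diag fps_scale_1 fps_scale_0)
qed (simp_all add: Wminus_Suc Pminus_Suc Rminus_Suc gauge_triangular_Gminus Gminus_simps
    vanishes_below_monom)

lemma fps_const_z_commute: "fps_const z * F = F * fps_const z"
  by (rule fps_ext) (simp only: fps_mult_left_const_nth fps_mult_right_const_nth z_central)

lemma Qminus_mult_transfer:
  assumes n: "n \<ge> 1"
  shows "Qminus n emb beta betas z * transfer n beta betas z
    = fps_scale q2inv (Qminus n emb beta betas z)
      + fps_scale q2 (Delta n K z) * fps_scale q2 (Qminus n emb beta betas z)"
proof -
  obtain n' where n': "n = Suc n'" using n by (cases n) auto
  have vanish: "vanishes_below a (Qpartial lminus n a b)" for a b
    unfolding n' by (rule vanishes_below_Qpartial)
  have Qminus_eq: "Qminus n emb beta betas z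
      = fps_lsum (\<lambda>a. fps_const (z ^ a) * Qpartial lminus n a a)"
    unfolding Qminus_def by (rule Qop_eq_lsum_Qpartial[OF n])
  have vanish10: "vanishes_below (Suc a) (Wminus n 1 0 a (Suc a))" for a
    using vanishes_below_mult[OF vanish vanishes_below_M_entry] by (simp add: Wminus_def n')
  have twist: "fps_const (z ^ Suc a) = fps_const (z ^ a) * fps_const z" for a
    by (simp only: power_Suc2 fps_const_mult)
  have "Qminus n emb beta betas z * transfer n beta betas z
      = fps_lsum (\<lambda>a. (fps_const (z ^ a) * Qpartial lminus n a a) * transfer n beta betas z)"
    unfolding Qminus_eq by (intro fps_lsum_mult_right vanishes_below_mult_left vanish)
  also have "\<dots> = fps_lsum (\<lambda>a. fps_const (z ^ a) * Wminus n 0 0 a a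
      + fps_const (z ^ Suc a) * Wminus n 1 1 a a)"
  proof -
    have "Qpartial lminus n a a * (fps_const z * M_entry n 1 1)
        = fps_const z * (Qpartial lminus n a a * M_entry n 1 1)" for a
      by (simp only: mult.assoc[symmetric]
          fps_const_z_commute[of "Qpartial lminus n a a", symmetric])
    then show ?thesis
      unfolding transfer_eq_M_entry Wminus_def twist by (simp only: distrib_left mult.assoc)
  qed
  also have "\<dots> = fps_lsum (\<lambda>a. fps_const (z ^ a) * Pminus n a a)
      + fps_lsum (\<lambda>a. fps_const (z ^ Suc a) * Rminus n a a)"
    by (rule gauge_triangular_twisted_trace[OF gauge_triangular_Wminus vanish10])
  also have "fps_lsum (\<lambda>a. fps_const (z ^ a) * Pminus n a a)
      = fps_scale q2inv (Qminus n emb beta betas z)"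
    by (simp add: Qminus_eq Pminus_def fps_scale_lsum fps_scale_const_mult emb_central)
  also have "fps_lsum (\<lambda>a. fps_const (z ^ Suc a) * Rminus n a a)
      = fps_scale q2 (Delta n K z) * fps_scale q2 (Qminus n emb beta betas z)"
  proof -
    have Delta_monom: "Delta n K z = fps_monom (z * K_sq_prod n) n"
      by (simp add: Delta_def K_sq_prod_def fps_monom_def)
    have Delta: "fps_scale q2 (Delta n K z) = fps_const (z * (K_sq_prod n * q2 ^ n)) * fps_X ^ n"
      unfolding Delta_monom fps_scale_monom
      by (simp only: fps_monom_def power_commuting_commutes[OF emb_central] mult.assoc)
    have "fps_const (z ^ Suc a) * Rminus n a a
        = fps_scale q2 (Delta n K z) * (fps_const (z ^ a) * fps_scale q2 (Qpartial lminus n a a))"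
      for a
    proof -
      have "emb (rho n a a) = q2 ^ n" by (simp only: rho_diag emb_power)
      moreover have "fps_const (z ^ a) * (fps_const (K_sq_prod n * q2 ^ n) * fps_X ^ n)
          = fps_const (K_sq_prod n * q2 ^ n) * fps_X ^ n * fps_const (z ^ a)"
        by (rule fps_const_z_power_commute)
      ultimately show ?thesis
        unfolding Rminus_def Delta power_Suc fps_const_mult[symmetric]
        by (simp only: mult.assoc) (simp only: mult.assoc[symmetric])
    qed
    then show ?thesis
      by (simp add: Qminus_eq fps_scale_lsum fps_scale_const_mult emb_central)
        (intro fps_lsum_mult_left[symmetric] vanishes_below_mult_left vanishes_below_scale vanish)
  qed
  finally show ?thesis .
qed

end

theorem mainTheorem4:
  fixes n :: nat and emb :: "cq \<Rightarrow> 'a::ring_1"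
    and beta betas K Kinv :: "nat \<Rightarrow> 'a" and z :: 'a
  assumes "n \<ge> 1"
    and "qboson_alg n emb beta betas K Kinv z"
  shows "transfer n beta betas z * Qplus n emb beta betas z
           = fps_scale (emb (qf ^ 2)) (Qplus n emb beta betas z)
             + Delta n K z * fps_scale (emb (inverse qf ^ 2)) (Qplus n emb beta betas z)
         \<and> Qminus n emb beta betas z * transfer n beta betas z
           = fps_scale (emb (inverse qf ^ 2)) (Qminus n emb beta betas z)
             + fps_scale (emb (qf ^ 2)) (Delta n K z) * fps_scale (emb (qf ^ 2))
               (Qminus n emb beta betas z)"
proof -
  interpret qboson_algebra n emb beta betas K Kinv z by unfold_locales (rule assms(2))
  show ?thesis using transfer_mult_Qplus[OF assms(1)] Qminus_mult_transfer[OF assms(1)] by simp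
qed

end
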